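(* Let $n\ge3$, $p\in\mathcal{P}_n$, and let $g_n\in\mathcal{P}_n$ be (an arc length parametrisation of) the regular planar $n$-gon of length $1$. Then $\Delta_n[g_n]^{-1}\le\Delta_n[p]^{-1}$, with equality if and only if $p$ is a regular $n$-gon.
   Context: $\mathbb{S}_1=\mathbb{R}/\mathbb{Z}$. $\mathcal{P}_n$ is the set of arc length parametrisations $p:\mathbb{S}_1\to\mathbb{R}^d$ of closed equilateral polygons with $n$ edges of total length $1$; consecutive vertices $x_1,\dots,x_n$, $x_0=x_n$, $x_{n+1}=x_1$. For consecutive vertices $x,y,z$ with exterior angle $\phi=\measuredangle(y-x,z-y)\in[0,\pi]$, $\kappa_d(x,y,z)=\frac{2\tan(\phi/2)}{(|x-y|+|z-y|)/2}$; $\mathrm{maxCurv}(p)=\max_i\kappa_d(x_{i-1},x_i,x_{i+1})$, $\mathrm{minRad}(p)=1/\mathrm{maxCurv}(p)$. $\mathrm{dcrit}(p)$ is the set of pairs of distinct points $x=p(t)$, $y=p(s)$ with $s$ a local extremum of $u\mapsto|p(t)-p(u)|^2$ and $t$ a local extremum of $v\mapsto|p(v)-p(s)|^2$; $\mathrm{dcsd}(p)=\min_{(x,y)\in\mathrm{dcrit}(p)}|x-y|$. $\Delta_n[p]=\min\{\mathrm{minRad}(p),\tfrac12\mathrm{dcsd}(p)\}$ if all vertices are pairwise distinct, $\Delta_n[p]=0$ otherwise; $\Delta_n[p]^{-1}=1/\Delta_n[p]$ (with $1/0=\infty$). *)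

theory Defs
  imports "HOL-Analysis.Analysis" "HOL-Library.Extended_Real"
begin

text \<open>Curves on S_1 = R/Z are represented as 1-periodic functions real => 'a.
  An element of P_n: closed equilateral polygon with n edges of total length 1,
  parametrised by arc length: there is a parameter shift t0 such that the vertices
  are p(t0 + k/n), consecutive vertices have distance 1/n and p is affine (hence
  unit speed) on each edge.\<close>

definition periodic1 :: "(real \<Rightarrow> 'a) \<Rightarrow> bool" where
  "periodic1 p \<longleftrightarrow> (\<forall>t. p (t + 1) = p t)"

definition poly_shift :: "nat \<Rightarrow> (real \<Rightarrow> 'a::real_normed_vector) \<Rightarrow> real \<Rightarrow> bool" where
  "poly_shift n p t0 \<longleftrightarrow>
     (\<forall>k::int. norm (p (t0 + (of_int k + 1) / real n) - p (t0 + of_int k / real n)) = 1 / real n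
        \<and> (\<forall>s\<in>{0..1}. p (t0 + (of_int k + s) / real n) =
              (1 - s) *\<^sub>R p (t0 + of_int k / real n) + s *\<^sub>R p (t0 + (of_int k + 1) / real n)))"

definition Pn :: "nat \<Rightarrow> (real \<Rightarrow> 'a::real_normed_vector) set" where
  "Pn n = {p. periodic1 p \<and> (\<exists>t0. poly_shift n p t0)}"

text \<open>Vertex x_k (k :: int, indices mod n) of p \<in> P_n, for a chosen admissible shift.\<close>
definition vert :: "nat \<Rightarrow> (real \<Rightarrow> 'a::real_normed_vector) \<Rightarrow> int \<Rightarrow> 'a" where
  "vert n p k = p ((SOME t0. poly_shift n p t0) + of_int k / real n)"

definition vec_angle :: "'a::real_inner \<Rightarrow> 'a \<Rightarrow> real" where
  "vec_angle u v = arccos ((u \<bullet> v) / (norm u * norm v))"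

text \<open>Discrete curvature kappa_d(x,y,z); value infinity when the exterior angle is pi
  (tan(pi/2) = infinity).\<close>
definition kappa_d :: "'a::real_inner \<Rightarrow> 'a \<Rightarrow> 'a \<Rightarrow> ereal" where
  "kappa_d x y z = (let \<phi> = vec_angle (y - x) (z - y) in
     if \<phi> = pi then \<infinity>
     else ereal (2 * tan (\<phi> / 2) / ((norm (x - y) + norm (z - y)) / 2)))"

definition maxCurv :: "nat \<Rightarrow> (real \<Rightarrow> 'a::real_inner) \<Rightarrow> ereal" where
  "maxCurv n p = Max ((\<lambda>i. kappa_d (vert n p (i - 1)) (vert n p i) (vert n p (i + 1))) ` {1..int n})"

definition minRad :: "nat \<Rightarrow> (real \<Rightarrow> 'a::real_inner) \<Rightarrow> ereal" where
  "minRad n p = inverse (maxCurv n p)"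

definition local_extremum :: "(real \<Rightarrow> real) \<Rightarrow> real \<Rightarrow> bool" where
  "local_extremum f s \<longleftrightarrow>
     (\<exists>e>0. \<forall>u. \<bar>u - s\<bar> < e \<longrightarrow> f u \<le> f s) \<or> (\<exists>e>0. \<forall>u. \<bar>u - s\<bar> < e \<longrightarrow> f s \<le> f u)"

definition dcrit :: "(real \<Rightarrow> 'a::real_normed_vector) \<Rightarrow> ('a \<times> 'a) set" where
  "dcrit p = {(p t, p s) | t s. p t \<noteq> p s
      \<and> local_extremum (\<lambda>u. (norm (p t - p u))\<^sup>2) s
      \<and> local_extremum (\<lambda>v. (norm (p v - p s))\<^sup>2) t}"

definition dcsd :: "(real \<Rightarrow> 'a::real_normed_vector) \<Rightarrow> ereal" where
  "dcsd p = (INF xy\<in>dcrit p. ereal (norm (fst xy - snd xy)))"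

definition Delta :: "nat \<Rightarrow> (real \<Rightarrow> 'a::real_inner) \<Rightarrow> ereal" where
  "Delta n p = (if inj_on (vert n p) {1..int n} then min (minRad n p) (dcsd p / 2) else 0)"

text \<open>Delta_n[p]^{-1}, with 1/0 = infinity.\<close>
definition Delta_inv :: "nat \<Rightarrow> (real \<Rightarrow> 'a::real_inner) \<Rightarrow> ereal" where
  "Delta_inv n p = inverse (Delta n p)"

definition regular_ngon :: "nat \<Rightarrow> (real \<Rightarrow> 'a::real_inner) \<Rightarrow> bool" where
  "regular_ngon n p \<longleftrightarrow> p \<in> Pn n \<and>
     (\<exists>t0 c e1 e2. poly_shift n p t0 \<and> norm e1 = 1 \<and> norm e2 = 1 \<and> e1 \<bullet> e2 = 0 \<and>
        (\<forall>k::int. p (t0 + of_int k / real n) =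
           c + (1 / (2 * real n * sin (pi / real n))) *\<^sub>R
               (cos (2 * pi * of_int k / real n) *\<^sub>R e1 + sin (2 * pi * of_int k / real n) *\<^sub>R e2)))"

end

theory Submission
  imports Defs
begin

(* Let T = 2 n tan(pi/n), the discrete curvature of the regular n-gon at each vertex.
   1. Rigidity of unit cycles: the edge directions U_k = n (x_(k+1) - x_k) of p form an
      n-periodic sequence of unit vectors with zero sum.  If every turning angle
      arccos (U_k . U_(k+1)) is at most 2 pi/n, the spherical triangle inequality gives
      U_i . U_(i+k) >= cos(2 pi k/n); summing over k (the cosines of the n-th roots of unity
      sum to 0, and so do the U_k) forces equality, so the U_k are planar roots of unity and p
      is regular.
   2. kappa_d of an equilateral polygon increases with the turning angle, hence by 1.
      maxCurv p >= T always, and maxCurv p <= T only if p is regular.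
   3. For the regular n-gon every distance-critical pair has distance at least twice the
      inradius r = 1/T (the polygon is convex, and a local extremum of the distance from
      another point lies behind a supporting line), so Delta g = minRad g = 1/T.
   Since Delta p <= minRad p <= 1/T with equality only if maxCurv p <= T, the theorem follows. *)

lemma abs_inner_unit_le:
  fixes u v :: "'a::real_inner"
  assumes "norm u = 1" "norm v = 1"
  shows "\<bar>u \<bullet> v\<bar> \<le> 1"
  using Cauchy_Schwarz_ineq2[of u v] assms by simp

text \<open>Cauchy-Schwarz applied to the components of u and w orthogonal to a unit vector v:
  u . w >= cos(A + B) where A, B are the angles of u and w with v.\<close>

lemma inner_ge_through_unit:
  fixes u v w :: "'a::real_inner"
  assumes u: "norm u = 1" and v: "norm v = 1" and w: "norm w = 1"
  shows "(u \<bullet> v) * (v \<bullet> w) - sqrt (1 - (u \<bullet> v)\<^sup>2) * sqrt (1 - (v \<bullet> w)\<^sup>2) \<le> u \<bullet> w"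
proof -
  define a where "a = u \<bullet> v"
  define b where "b = v \<bullet> w"
  define u' where "u' = u - a *\<^sub>R v"
  define w' where "w' = w - b *\<^sub>R v"
  have vv: "v \<bullet> v = 1" and uu: "u \<bullet> u = 1" and ww: "w \<bullet> w = 1"
    using u v w by (simp_all add: dot_square_norm)
  have u'w': "u' \<bullet> w' = u \<bullet> w - a * b"
    unfolding u'_def w'_def by (simp add: inner_diff_left inner_diff_right vv a_def b_def inner_commute)
  have "norm u' ^ 2 = 1 - a^2"
    unfolding u'_def power2_norm_eq_inner
    by (simp add: inner_diff_left inner_diff_right vv uu a_def inner_commute power2_eq_square)
  then have nu': "norm u' = sqrt (1 - a^2)" by (metis norm_ge_zero real_sqrt_unique)
  have "norm w' ^ 2 = 1 - b^2"
    unfolding w'_def power2_norm_eq_inner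
    by (simp add: inner_diff_left inner_diff_right vv ww b_def inner_commute power2_eq_square)
  then have nw': "norm w' = sqrt (1 - b^2)" by (metis norm_ge_zero real_sqrt_unique)
  have "- (norm u' * norm w') \<le> u' \<bullet> w'" using Cauchy_Schwarz_ineq2[of u' w'] by (simp add: abs_le_iff)
  then show ?thesis using u'w' nu' nw' by (simp add: a_def b_def)
qed

lemma arccos_inner_triangle:
  fixes u v w :: "'a::real_inner"
  assumes u: "norm u = 1" and v: "norm v = 1" and w: "norm w = 1"
  shows "arccos (u \<bullet> w) \<le> arccos (u \<bullet> v) + arccos (v \<bullet> w)"
proof -
  define A where "A = arccos (u \<bullet> v)"
  define B where "B = arccos (v \<bullet> w)"
  have a1: "\<bar>u \<bullet> v\<bar> \<le> 1" by (rule abs_inner_unit_le[OF u v])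
  have b1: "\<bar>v \<bullet> w\<bar> \<le> 1" by (rule abs_inner_unit_le[OF v w])
  have uw1: "\<bar>u \<bullet> w\<bar> \<le> 1" by (rule abs_inner_unit_le[OF u w])
  have A0: "0 \<le> A" "A \<le> pi" unfolding A_def using a1 by (auto intro: arccos_lbound arccos_ubound)
  have B0: "0 \<le> B" "B \<le> pi" unfolding B_def using b1 by (auto intro: arccos_lbound arccos_ubound)
  have "cos (A + B) = (u \<bullet> v) * (v \<bullet> w) - sqrt (1 - (u \<bullet> v)\<^sup>2) * sqrt (1 - (v \<bullet> w)\<^sup>2)"
    unfolding A_def B_def cos_add using a1 b1 by (simp add: sin_arccos_abs)
  then have cAB: "cos (A + B) \<le> cos (arccos (u \<bullet> w))"
    using inner_ge_through_unit[OF u v w] uw1 by simp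
  show ?thesis
  proof (cases "A + B \<le> pi")
    case False
    have "arccos (u \<bullet> w) \<le> pi" using arccos_ubound[of "u \<bullet> w"] uw1 by (simp add: abs_le_iff)
    then show ?thesis using False A_def B_def by auto
  next
    case True
    then have "arccos (u \<bullet> w) \<le> A + B"
      using cAB cos_mono_le_eq[of "A+B" "arccos (u \<bullet> w)"] A0 B0 uw1
        arccos_lbound[of "u \<bullet> w"] arccos_ubound[of "u \<bullet> w"] by auto
    then show ?thesis by (simp add: A_def B_def)
  qed
qed

lemma cos_le_inner_of_arccos_le:
  fixes u v :: "'a::real_inner"
  assumes "norm u = 1" "norm v = 1" and "arccos (u \<bullet> v) \<le> x" "x \<le> pi"
  shows "cos x \<le> u \<bullet> v"
proof -
  have uv: "\<bar>u \<bullet> v\<bar> \<le> 1" using abs_inner_unit_le assms(1,2) .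
  then have "0 \<le> arccos (u \<bullet> v)" "arccos (u \<bullet> v) \<le> pi"
    by (auto intro!: arccos_lbound arccos_ubound simp: abs_le_iff)
  then have "cos x \<le> cos (arccos (u \<bullet> v))"
    using assms(3,4) cos_mono_le_eq[of x "arccos (u \<bullet> v)"] by auto
  then show ?thesis using uv by (simp add: abs_le_iff)
qed

lemma periodic_add_mult:
  fixes U :: "int \<Rightarrow> 'b"
  assumes per: "\<And>k. U (k + int n) = U k"
  shows "U (k + j * int n) = U k"
proof (induction j rule: int_induct[where k=0])
  case base then show ?case by simp
next
  case (step1 i) then show ?case using per[of "k + i * int n"] by (simp add: algebra_simps)
next
  case (step2 i) then show ?case using per[of "k + (i - 1) * int n"] by (simp add: algebra_simps)
qed

lemma periodic_mod:
  fixes U :: "int \<Rightarrow> 'b"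
  assumes per: "\<And>k. U (k + int n) = U k"
  shows "U k = U (k mod int n)"
  using periodic_add_mult[of U n, OF per, of "k mod int n" "k div int n"]
  by (metis mod_div_mult_eq)

lemma periodic_sum_shift:
  fixes f :: "int \<Rightarrow> 'b::ab_group_add"
  assumes per: "\<And>k. f (k + int n) = f k"
  shows "(\<Sum>k<n. f (int i + int k)) = (\<Sum>k<n. f (int k))"
proof (induction i)
  case 0 then show ?case by simp
next
  case (Suc i)
  have "(\<Sum>k<Suc n. f (int i + int k)) = (\<Sum>k<n. f (int i + int k)) + f (int i + int n)"
    by simp
  moreover have "(\<Sum>k<Suc n. f (int i + int k)) = f (int i) + (\<Sum>k<n. f (int (Suc i) + int k))"
    by (subst sum.lessThan_Suc_shift) (simp add: algebra_simps)
  ultimately have "(\<Sum>k<n. f (int (Suc i) + int k)) = (\<Sum>k<n. f (int i + int k))"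
    using per[of "int i"] by (simp add: algebra_simps)
  then show ?case using Suc by simp
qed

text \<open>The real parts of the n-th roots of unity sum to zero (telescoping against sin(pi/n)).\<close>

lemma sum_cos_roots_of_unity:
  assumes n: "n \<ge> 2"
  shows "(\<Sum>k<n. cos (2 * pi * real k / real n)) = 0"
proof -
  define h where "h = pi / real n"
  have "0 < h" "h < pi" using n by (auto simp: h_def field_simps)
  then have sh: "sin h \<noteq> 0" using sin_gt_zero by fastforce
  have tel: "2 * sin h * cos (2 * pi * real k / real n)
      = sin ((2 * real (Suc k) - 1) * h) - sin ((2 * real k - 1) * h)" for k
  proof -
    have e: "2 * pi * real k / real n = 2 * real k * h" using n by (simp add: h_def)
    have "sin ((2 * real (Suc k) - 1) * h) = sin (2 * real k * h + h)" by (simp add: algebra_simps)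
    moreover have "sin ((2 * real k - 1) * h) = sin (2 * real k * h - h)" by (simp add: algebra_simps)
    ultimately show ?thesis unfolding e by (simp add: sin_add sin_diff)
  qed
  have "2 * sin h * (\<Sum>k<n. cos (2 * pi * real k / real n))
      = (\<Sum>k<n. sin ((2 * real (Suc k) - 1) * h) - sin ((2 * real k - 1) * h))"
    by (simp add: sum_distrib_left tel)
  also have "\<dots> = sin ((2 * real n - 1) * h) - sin ((2 * real 0 - 1) * h)"
    by (rule sum_lessThan_telescope)
  also have "(2 * real n - 1) * h = 2 * pi - h" using n by (simp add: h_def algebra_simps)
  finally show ?thesis using sh by simp
qed

lemma cos_2pi_mod:
  assumes "n > 0"
  shows "cos (2 * pi * real_of_int k / real n) = cos (2 * pi * real_of_int (k mod int n) / real n)"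
proof -
  have "real_of_int k = real_of_int (k mod int n) + real_of_int (k div int n) * real n"
    by (metis mod_div_mult_eq of_int_add of_int_mult of_int_of_nat_eq)
  then have "2 * pi * real_of_int k / real n
      = 2 * pi * real_of_int (k mod int n) / real n + 2 * pi * real_of_int (k div int n)"
    using assms by (simp add: field_simps)
  then show ?thesis by (simp add: cos_add)
qed

lemma unit_in_orthonormal_span:
  fixes v a b :: "'a::real_inner"
  assumes "v \<bullet> v = 1" "a \<bullet> a = 1" "a \<bullet> b = 0" "b \<bullet> b = 1"
    and "v \<bullet> a = C" "v \<bullet> b = S" and "C\<^sup>2 + S\<^sup>2 = 1"
  shows "v = C *\<^sub>R a + S *\<^sub>R b"
proof -
  define z where "z = v - (C *\<^sub>R a + S *\<^sub>R b)"
  have "z \<bullet> z = v \<bullet> v - 2 * (C * (v \<bullet> a) + S * (v \<bullet> b))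
      + (C * C * (a \<bullet> a) + 2 * C * S * (a \<bullet> b) + S * S * (b \<bullet> b))"
    by (simp add: z_def inner_commute algebra_simps)
  also have "\<dots> = 1 - (C\<^sup>2 + S\<^sup>2)" using assms(1-6) by (simp add: power2_eq_square)
  finally have "z = 0" using assms(7) by simp
  then show ?thesis by (simp add: z_def)
qed

text \<open>A sequence with the Gram matrix of the n-th roots of unity consists of n-th roots of
  unity in some plane: V_k = cos(2 pi k/n) a + sin(2 pi k/n) b for an orthonormal pair a, b
  (take a = V_0 and b the normalised component of V_1 orthogonal to V_0).\<close>

lemma roots_of_unity_from_gram:
  fixes V :: "int \<Rightarrow> 'a::real_inner"
  assumes n: "n \<ge> 3"
    and G: "\<And>i k. V i \<bullet> V (i + k) = cos (2 * pi * real_of_int k / real n)"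
  shows "\<exists>a b. norm a = 1 \<and> norm b = 1 \<and> a \<bullet> b = 0 \<and>
     (\<forall>k. V k = cos (2 * pi * real_of_int k / real n) *\<^sub>R a + sin (2 * pi * real_of_int k / real n) *\<^sub>R b)"
proof -
  define \<theta> where "\<theta> = 2 * pi / real n"
  have th: "0 < \<theta>" "\<theta> < pi" using n by (auto simp: \<theta>_def field_simps)
  define c where "c = cos \<theta>"
  define s where "s = sin \<theta>"
  have s0: "s > 0" using sin_gt_zero[OF th] by (simp add: s_def)
  have Gij: "V i \<bullet> V j = cos (real_of_int (j - i) * \<theta>)" for i j
    using G[of i "j - i"] by (simp add: \<theta>_def mult.commute)
  define a where "a = V 0"
  define b where "b = (1 / s) *\<^sub>R (V 1 - c *\<^sub>R V 0)"
  have G00: "V 0 \<bullet> V 0 = 1" using Gij[of 0 0] by simp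
  have G01: "V 0 \<bullet> V 1 = c" using Gij[of 0 1] by (simp add: c_def)
  have G11: "V 1 \<bullet> V 1 = 1" using Gij[of 1 1] by simp
  have G10: "V 1 \<bullet> V 0 = c" using G01 by (simp add: inner_commute)
  have aa: "a \<bullet> a = 1" by (simp add: a_def G00)
  have ab: "a \<bullet> b = 0" by (simp add: a_def b_def inner_diff_right G00 G01)
  have bb: "b \<bullet> b = 1"
  proof -
    have "b \<bullet> b = (1 - c^2) / s^2"
      using s0 by (simp add: b_def inner_diff_right inner_diff_left G00 G01 G10 G11 power2_eq_square field_simps)
    then show ?thesis using s0 by (simp add: c_def s_def cos_squared_eq)
  qed
  have V_eq: "V k = cos (real_of_int k * \<theta>) *\<^sub>R a + sin (real_of_int k * \<theta>) *\<^sub>R b" for k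
  proof -
    define C where "C = cos (real_of_int k * \<theta>)"
    define S where "S = sin (real_of_int k * \<theta>)"
    have Gk0: "V k \<bullet> V 0 = C" using Gij[of k 0] by (simp add: C_def)
    have Gk1: "V k \<bullet> V 1 = C * c + S * s"
    proof -
      have "V k \<bullet> V 1 = cos (real_of_int k * \<theta> - \<theta>)"
        using Gij[of k 1] by (metis cos_minus minus_diff_eq of_int_1 of_int_diff left_diff_distrib mult_1 mult.commute)
      then show ?thesis by (simp add: cos_diff C_def S_def c_def s_def)
    qed
    have Gkk: "V k \<bullet> V k = 1" using Gij[of k k] by simp
    have Ua: "V k \<bullet> a = C" by (simp add: a_def Gk0)
    have Ub: "V k \<bullet> b = S" using s0 by (simp add: b_def inner_diff_right Gk1 Gk0 field_simps)
    show ?thesis unfolding C_def[symmetric] S_def[symmetric]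
      by (rule unit_in_orthonormal_span) (use Gkk aa ab bb Ua Ub in \<open>auto simp: C_def S_def norm_eq_1\<close>)
  qed
  show ?thesis
    using aa ab bb V_eq by (intro exI[of _ a] exI[of _ b]) (simp add: norm_eq_1 \<theta>_def mult.commute)
qed

text \<open>A unit cycle of length n is an n-periodic sequence of unit
  vectors with zero sum over a period (the normalised edge vectors of a closed equilateral
  n-gon).\<close>

locale unit_cycle =
  fixes n :: nat and U :: "int \<Rightarrow> 'a::real_inner"
  assumes n3: "n \<ge> 3"
    and periodic: "\<And>k. U (k + int n) = U k"
    and unit: "\<And>k. norm (U k) = 1"
    and closed: "(\<Sum>k<n. U (int k)) = 0"
begin

lemma arccos_inner_range: "0 \<le> arccos (U i \<bullet> U j)" "arccos (U i \<bullet> U j) \<le> pi"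
  using abs_inner_unit_le[OF unit unit, of i j]
  by (auto intro!: arccos_lbound arccos_ubound simp: abs_le_iff)

lemma chain_angle_le:
  assumes step: "\<And>k. arccos (U k \<bullet> U (k + 1)) \<le> \<theta>"
  shows "arccos (U i \<bullet> U (i + int m)) \<le> real m * \<theta>"
proof (induction m)
  case 0
  have "U i \<bullet> U i = 1" using unit[of i] by (simp add: dot_square_norm)
  then show ?case by simp
next
  case (Suc m)
  have "arccos (U i \<bullet> U (i + int (Suc m)))
      \<le> arccos (U i \<bullet> U (i + int m)) + arccos (U (i + int m) \<bullet> U (i + int m + 1))"
    using arccos_inner_triangle[OF unit[of i] unit[of "i + int m"] unit[of "i + int m + 1"]]
    by (simp add: algebra_simps)
  also have "\<dots> \<le> real m * \<theta> + \<theta>" using Suc step[of "i + int m"] by simp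
  finally show ?case by (simp add: algebra_simps)
qed

text \<open>Going around the cycle the short way (k or n - k steps) gives the lower bound
  cos(2 pi k/n) for every inner product.\<close>

lemma inner_ge_cos:
  assumes step: "\<And>k. arccos (U k \<bullet> U (k + 1)) \<le> 2 * pi / real n" and "k < n"
  shows "cos (2 * pi * real k / real n) \<le> U i \<bullet> U (i + int k)"
proof (cases "2 * k \<le> n")
  case True
  have "real k * (2 * pi / real n) \<le> pi" using True n3 by (simp add: field_simps)
  then show ?thesis
    using cos_le_inner_of_arccos_le[OF unit unit chain_angle_le[OF step]] by (simp add: mult.commute)
next
  case False
  define m where "m = n - k"
  have "real m * (2 * pi / real n) \<le> pi"
    using False assms(2) n3 by (simp add: field_simps m_def)
  then have "cos (real m * (2 * pi / real n)) \<le> U (i + int k) \<bullet> U (i + int k + int m)"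
    using cos_le_inner_of_arccos_le[OF unit unit chain_angle_le[OF step]] by blast
  moreover have "U (i + int k + int m) = U i" using periodic[of i] assms(2) by (simp add: m_def)
  moreover have "real m * (2 * pi / real n) = 2 * pi - 2 * pi * real k / real n"
    using assms(2) n3 by (simp add: m_def field_simps)
  ultimately show ?thesis by (simp add: inner_commute)
qed

text \<open>Summing the lower bounds over a full period gives sum_k U_i . U_(i+k) = U_i . 0 = 0
  on the left and 0 on the right, so every lower bound is attained.\<close>

lemma gram_nat:
  assumes step: "\<And>k. arccos (U k \<bullet> U (k + 1)) \<le> 2 * pi / real n" and "i < n" "k < n"
  shows "U (int i) \<bullet> U (int i + int k) = cos (2 * pi * real k / real n)"
proof -
  define F where "F i k = U (int i) \<bullet> U (int i + int k) - cos (2 * pi * real k / real n)" for i k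
  have F_nonneg: "0 \<le> F i k" if "k < n" for i k
    using inner_ge_cos[OF step that] by (simp add: F_def)
  have row_sum: "(\<Sum>k<n. U (int i) \<bullet> U (int i + int k)) = 0" for i
    by (simp add: inner_sum_right[symmetric] periodic_sum_shift[of U n, OF periodic] closed)
  have "(\<Sum>i<n. \<Sum>k<n. F i k) = 0"
    using n3 unfolding F_def sum_subtractf by (simp add: row_sum sum_cos_roots_of_unity)
  then have "\<forall>i\<in>{..<n}. (\<Sum>k<n. F i k) = 0"
    by (subst (asm) sum_nonneg_eq_0_iff) (auto intro!: sum_nonneg F_nonneg)
  then have "F i k = 0"
    using assms(2,3) sum_nonneg_eq_0_iff[of "{..<n}" "F i"] F_nonneg by auto
  then show ?thesis by (simp add: F_def)
qed

lemma gram: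
  assumes step: "\<And>k. arccos (U k \<bullet> U (k + 1)) \<le> 2 * pi / real n"
  shows "U i \<bullet> U (i + k) = cos (2 * pi * real_of_int k / real n)"
proof -
  have n0: "n > 0" using n3 by simp
  define i' where "i' = nat (i mod int n)"
  define k' where "k' = nat (k mod int n)"
  have i': "i' < n" "int i' = i mod int n" using n0 unfolding i'_def by (auto simp: nat_less_iff)
  have k': "k' < n" "int k' = k mod int n" using n0 unfolding k'_def by (auto simp: nat_less_iff)
  have "U i = U (int i')" using periodic_mod[of U n, OF periodic, of i] i' by simp
  moreover have "U (i + k) = U (int i' + int k')"
    using periodic_mod[of U n, OF periodic, of "i + k"]
      periodic_mod[of U n, OF periodic, of "int i' + int k'"] i' k'
    by (simp add: mod_add_eq)
  moreover have "cos (2 * pi * real_of_int k / real n) = cos (2 * pi * real k' / real n)"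
    using cos_2pi_mod[OF n0, of k] k'(2) by (metis of_int_of_nat_eq)
  ultimately show ?thesis using gram_nat[OF step i'(1) k'(1)] by simp
qed

lemma planar_roots_of_unity:
  assumes step: "\<And>k. arccos (U k \<bullet> U (k + 1)) \<le> 2 * pi / real n"
  shows "\<exists>a b. norm a = 1 \<and> norm b = 1 \<and> a \<bullet> b = 0 \<and>
     (\<forall>k. U k = cos (2 * pi * real_of_int k / real n) *\<^sub>R a + sin (2 * pi * real_of_int k / real n) *\<^sub>R b)"
  by (rule roots_of_unity_from_gram[OF n3 gram[OF step]])

end

text \<open>The frame of the circle is
  the frame a, b rotated by -(pi/2 + pi/n).\<close>

lemma rotated_frame_step:
  fixes a b :: "'a::real_vector"
  shows "(cos (x + 2 * h) - cos x) *\<^sub>R ((- sin h) *\<^sub>R a - cos h *\<^sub>R b)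
       + (sin (x + 2 * h) - sin x) *\<^sub>R (cos h *\<^sub>R a - sin h *\<^sub>R b)
       = (2 * sin h) *\<^sub>R (cos x *\<^sub>R a + sin x *\<^sub>R b)"
proof -
  have sc: "sin h * sin h + cos h * cos h = 1"
    using sin_cos_squared_add[of h] unfolding power2_eq_square by linarith
  have ca: "-(cos (x + 2*h) - cos x) * sin h + (sin (x + 2*h) - sin x) * cos h = 2 * sin h * cos x"
    unfolding cos_add sin_add cos_double sin_double power2_eq_square using sc by algebra
  have cb: "-(cos (x + 2*h) - cos x) * cos h - (sin (x + 2*h) - sin x) * sin h = 2 * sin h * sin x"
    unfolding cos_add sin_add cos_double sin_double power2_eq_square using sc by algebra
  have "(cos (x + 2 * h) - cos x) *\<^sub>R ((- sin h) *\<^sub>R a - cos h *\<^sub>R b)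
       + (sin (x + 2 * h) - sin x) *\<^sub>R (cos h *\<^sub>R a - sin h *\<^sub>R b)
     = (-(cos (x + 2*h) - cos x) * sin h + (sin (x + 2*h) - sin x) * cos h) *\<^sub>R a
       + (-(cos (x + 2*h) - cos x) * cos h - (sin (x + 2*h) - sin x) * sin h) *\<^sub>R b"
    by (simp add: algebra_simps)
  also have "\<dots> = (2 * sin h) *\<^sub>R (cos x *\<^sub>R a + sin x *\<^sub>R b)"
    unfolding ca cb by (simp add: algebra_simps)
  finally show ?thesis .
qed

lemma rotated_frame_orthonormal:
  fixes a b :: "'a::real_inner"
  assumes ab: "norm a = 1" "norm b = 1" "a \<bullet> b = 0"
  shows "norm ((- sin h) *\<^sub>R a - cos h *\<^sub>R b) = 1" and "norm (cos h *\<^sub>R a - sin h *\<^sub>R b) = 1"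
    and "((- sin h) *\<^sub>R a - cos h *\<^sub>R b) \<bullet> (cos h *\<^sub>R a - sin h *\<^sub>R b) = 0"
proof -
  have aa: "a \<bullet> a = 1" and bb: "b \<bullet> b = 1" and ba: "b \<bullet> a = 0"
    using ab by (auto simp: dot_square_norm inner_commute)
  have sc: "sin h * sin h + cos h * cos h = 1"
    using sin_cos_squared_add[of h] unfolding power2_eq_square by linarith
  show "norm ((- sin h) *\<^sub>R a - cos h *\<^sub>R b) = 1"
    unfolding norm_eq_1 by (simp add: inner_diff_left inner_diff_right aa bb ab(3) ba sc)
  show "norm (cos h *\<^sub>R a - sin h *\<^sub>R b) = 1"
    unfolding norm_eq_1 by (simp add: inner_diff_left inner_diff_right aa bb ab(3) ba)
  show "((- sin h) *\<^sub>R a - cos h *\<^sub>R b) \<bullet> (cos h *\<^sub>R a - sin h *\<^sub>R b) = 0"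
    by (simp add: inner_diff_left inner_diff_right aa bb ab(3) ba)
qed

lemma regular_from_edge_directions:
  fixes V :: "int \<Rightarrow> 'a::real_inner"
  assumes n: "n \<ge> 3" and ab: "norm a = 1" "norm b = 1" "a \<bullet> b = 0"
    and step: "\<And>k. V (k + 1) = V k + (1 / real n) *\<^sub>R
        (cos (2 * pi * real_of_int k / real n) *\<^sub>R a + sin (2 * pi * real_of_int k / real n) *\<^sub>R b)"
  shows "\<exists>c e1 e2. norm e1 = 1 \<and> norm e2 = 1 \<and> e1 \<bullet> e2 = 0 \<and>
     (\<forall>k. V k = c + (1 / (2 * real n * sin (pi / real n))) *\<^sub>R
        (cos (2 * pi * real_of_int k / real n) *\<^sub>R e1 + sin (2 * pi * real_of_int k / real n) *\<^sub>R e2))"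
proof -
  define h where "h = pi / real n"
  define R where "R = 1 / (2 * real n * sin h)"
  have "0 < h" "h < pi" using n by (auto simp: h_def field_simps)
  then have sh: "sin h > 0" by (rule sin_gt_zero)
  define e1 where "e1 = (- sin h) *\<^sub>R a - cos h *\<^sub>R b"
  define e2 where "e2 = cos h *\<^sub>R a - sin h *\<^sub>R b"
  have e1: "norm e1 = 1" and e2: "norm e2 = 1" and e12: "e1 \<bullet> e2 = 0"
    unfolding e1_def e2_def by (rule rotated_frame_orthonormal[OF ab])+
  define c where "c = V 0 - R *\<^sub>R e1"
  define W where "W k = c + R *\<^sub>R (cos (2 * pi * real_of_int k / real n) *\<^sub>R e1
                                   + sin (2 * pi * real_of_int k / real n) *\<^sub>R e2)" for k
  have W_step: "W (k + 1) = W k + (1 / real n) *\<^sub>R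
      (cos (2 * pi * real_of_int k / real n) *\<^sub>R a + sin (2 * pi * real_of_int k / real n) *\<^sub>R b)" for k
  proof -
    define x where "x = 2 * pi * real_of_int k / real n"
    have x1: "2 * pi * real_of_int (k + 1) / real n = x + 2 * h"
      using n by (simp add: x_def h_def field_simps)
    have "W (k + 1) - W k = R *\<^sub>R ((cos (x + 2 * h) - cos x) *\<^sub>R e1 + (sin (x + 2 * h) - sin x) *\<^sub>R e2)"
      unfolding W_def x1 x_def[symmetric] by (simp add: algebra_simps)
    also have "\<dots> = (R * (2 * sin h)) *\<^sub>R (cos x *\<^sub>R a + sin x *\<^sub>R b)"
      unfolding e1_def e2_def rotated_frame_step by simp
    also have "R * (2 * sin h) = 1 / real n" using sh n by (simp add: R_def)
    finally show ?thesis by (simp add: x_def algebra_simps)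
  qed
  have "V k = W k" for k
  proof (induction k rule: int_induct[where k=0])
    case base then show ?case by (simp add: W_def c_def)
  next
    case (step1 i) then show ?case using W_step[of i] step[of i] by simp
  next
    case (step2 i) then show ?case using W_step[of "i - 1"] step[of "i - 1"] by simp
  qed
  then show ?thesis using e1 e2 e12 unfolding W_def R_def h_def by blast
qed

lemma Pn_shift:
  assumes "p \<in> Pn n"
  shows "poly_shift n p (SOME t. poly_shift n p t)"
  using assms unfolding Pn_def by (auto intro: someI_ex)

lemma vert_dist:
  assumes "p \<in> Pn n"
  shows "norm (vert n p (k + 1) - vert n p k) = 1 / real n"
proof -
  let ?t = "SOME t. poly_shift n p t"
  have "norm (p (?t + (of_int k + 1) / real n) - p (?t + of_int k / real n)) = 1 / real n"
    using Pn_shift[OF assms] unfolding poly_shift_def by blast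
  then show ?thesis unfolding vert_def by simp
qed

lemma vert_periodic:
  assumes "p \<in> Pn n" "n > 0"
  shows "vert n p (k + int n) = vert n p k"
proof -
  let ?t = "SOME t. poly_shift n p t"
  have "?t + real_of_int (k + int n) / real n = (?t + real_of_int k / real n) + 1"
    using assms(2) by (simp add: field_simps)
  moreover have "periodic1 p" using assms(1) unfolding Pn_def by auto
  ultimately show ?thesis unfolding vert_def periodic1_def by metis
qed

definition edge_dir :: "nat \<Rightarrow> (real \<Rightarrow> 'a::real_normed_vector) \<Rightarrow> int \<Rightarrow> 'a" where
  "edge_dir n p k = real n *\<^sub>R (vert n p (k + 1) - vert n p k)"

lemma vert_succ:
  assumes "n > 0"
  shows "vert n p (k + 1) = vert n p k + (1 / real n) *\<^sub>R edge_dir n p k"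
  using assms by (simp add: edge_dir_def)

lemma edge_dir_unit_cycle:
  fixes p :: "real \<Rightarrow> 'a::real_inner"
  assumes p: "p \<in> Pn n" and n: "n \<ge> 3"
  shows "unit_cycle n (edge_dir n p)"
proof
  show "n \<ge> 3" by (rule n)
  show "norm (edge_dir n p k) = 1" for k using vert_dist[OF p, of k] n by (simp add: edge_dir_def)
  show "edge_dir n p (k + int n) = edge_dir n p k" for k
    using vert_periodic[OF p, of k] vert_periodic[OF p, of "k + 1"] n by (simp add: edge_dir_def algebra_simps)
  have "(\<Sum>k<n. edge_dir n p (int k)) = real n *\<^sub>R (\<Sum>k<n. vert n p (int (Suc k)) - vert n p (int k))"
    by (simp add: edge_dir_def scaleR_sum_right add.commute)
  also have "(\<Sum>k<n. vert n p (int (Suc k)) - vert n p (int k)) = vert n p (int n) - vert n p (int 0)"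
    by (rule sum_lessThan_telescope)
  also have "vert n p (int n) = vert n p (int 0)" using vert_periodic[OF p, of 0] n by simp
  finally show "(\<Sum>k<n. edge_dir n p (int k)) = 0" by simp
qed

text \<open>With both adjacent edges of length 1/n,
  kappa_d is an increasing function of the exterior angle phi alone; the regular n-gon has
  exterior angle 2 pi/n and hence curvature 2 n tan(pi/n).\<close>

definition angle_curvature :: "nat \<Rightarrow> real \<Rightarrow> ereal" where
  "angle_curvature n \<phi> = (if \<phi> = pi then \<infinity> else ereal (2 * real n * tan (\<phi> / 2)))"

definition regular_curvature :: "nat \<Rightarrow> real" where
  "regular_curvature n = 2 * real n * tan (pi / real n)"

lemma regular_curvature_pos:
  assumes "n \<ge> 3"
  shows "regular_curvature n > 0"
proof -
  have "tan (pi / real n) > 0" using assms by (intro tan_gt_zero) (auto simp: field_simps)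
  then show ?thesis using assms by (simp add: regular_curvature_def)
qed

lemma kappa_equilateral:
  fixes x y z :: "'a::real_inner"
  assumes "n > 0" and "norm (y - x) = 1 / real n" "norm (z - y) = 1 / real n"
  shows "kappa_d x y z = angle_curvature n (vec_angle (y - x) (z - y))"
proof -
  have "(norm (x - y) + norm (z - y)) / 2 = 1 / real n"
    using assms(2,3) by (simp add: norm_minus_commute)
  then show ?thesis unfolding kappa_d_def angle_curvature_def Let_def using assms(1) by simp
qed

lemma angle_curvature_mono_iff:
  assumes n: "n \<ge> 3" and \<phi>: "0 \<le> \<phi>" "\<phi> \<le> pi"
  shows "ereal (regular_curvature n) \<le> angle_curvature n \<phi> \<longleftrightarrow> 2 * pi / real n \<le> \<phi>"
    and "angle_curvature n \<phi> \<le> ereal (regular_curvature n) \<longleftrightarrow> \<phi> \<le> 2 * pi / real n"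
proof -
  have n0: "real n > 0" using n by simp
  have pn: "0 < pi / real n" "pi / real n < pi / 2" using n by (auto simp: field_simps)
  have "2 * pi / real n < pi" using n by (simp add: field_simps)
  moreover have "tan (pi / real n) \<le> tan (\<phi> / 2) \<longleftrightarrow> pi / real n \<le> \<phi> / 2"
    and "tan (\<phi> / 2) \<le> tan (pi / real n) \<longleftrightarrow> \<phi> / 2 \<le> pi / real n" if "\<phi> \<noteq> pi"
  proof -
    have "\<phi> / 2 < pi / 2" using that \<phi> by simp
    then show "tan (pi / real n) \<le> tan (\<phi> / 2) \<longleftrightarrow> pi / real n \<le> \<phi> / 2"
      and "tan (\<phi> / 2) \<le> tan (pi / real n) \<longleftrightarrow> \<phi> / 2 \<le> pi / real n"
      using tan_mono_le_eq[of "pi / real n" "\<phi> / 2"] tan_mono_le_eq[of "\<phi> / 2" "pi / real n"] pn \<phi>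
      by auto
  qed
  ultimately show "ereal (regular_curvature n) \<le> angle_curvature n \<phi> \<longleftrightarrow> 2 * pi / real n \<le> \<phi>"
    and "angle_curvature n \<phi> \<le> ereal (regular_curvature n) \<longleftrightarrow> \<phi> \<le> 2 * pi / real n"
    using n0 by (auto simp: angle_curvature_def regular_curvature_def field_simps)
qed

lemma vec_angle_scale:
  fixes u v :: "'a::real_inner"
  assumes "norm u = 1" "norm v = 1" "c > 0"
  shows "vec_angle (c *\<^sub>R u) (c *\<^sub>R v) = arccos (u \<bullet> v)"
  using assms unfolding vec_angle_def by (simp add: power2_eq_square)

lemma kappa_vert:
  fixes p :: "real \<Rightarrow> 'a::real_inner"
  assumes p: "p \<in> Pn n" and n: "n \<ge> 3"
  shows "kappa_d (vert n p (i - 1)) (vert n p i) (vert n p (i + 1))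
       = angle_curvature n (arccos (edge_dir n p (i - 1) \<bullet> edge_dir n p i))"
proof -
  interpret unit_cycle n "edge_dir n p" by (rule edge_dir_unit_cycle[OF p n])
  have n0: "n > 0" "real n > 0" using n by auto
  have d1: "vert n p i - vert n p (i - 1) = (1 / real n) *\<^sub>R edge_dir n p (i - 1)"
    using vert_succ[OF n0(1), of p "i - 1"] by simp
  have d2: "vert n p (i + 1) - vert n p i = (1 / real n) *\<^sub>R edge_dir n p i"
    using vert_succ[OF n0(1), of p i] by simp
  have "vec_angle (vert n p i - vert n p (i - 1)) (vert n p (i + 1) - vert n p i)
      = arccos (edge_dir n p (i - 1) \<bullet> edge_dir n p i)"
    unfolding d1 d2 using n0 by (intro vec_angle_scale unit) simp
  moreover have "norm (vert n p i - vert n p (i - 1)) = 1 / real n"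
    using vert_dist[OF p, of "i - 1"] by simp
  ultimately show ?thesis using kappa_equilateral[OF n0(1) _ vert_dist[OF p, of i]] by simp
qed

lemma periodic_consecutive:
  fixes U :: "int \<Rightarrow> 'a"
  assumes per: "\<And>k. U (k + int n) = U k" and n: "n > 0"
    and H: "\<And>i. i \<in> {1..int n} \<Longrightarrow> P (U (i - 1)) (U i)"
  shows "P (U k) (U (k + 1))"
proof -
  define i where "i = k mod int n + 1"
  have "0 \<le> k mod int n" "k mod int n < int n" using n by simp_all
  then have i: "i \<in> {1..int n}" unfolding i_def by simp
  have "U (i - 1) = U k" using periodic_mod[of U n, OF per, of k] by (simp add: i_def)
  moreover have "U i = U (k + 1)"
    using periodic_mod[of U n, OF per, of "k + 1"] periodic_mod[of U n, OF per, of i]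
    by (simp add: i_def mod_add_left_eq)
  ultimately show ?thesis using H[OF i] by simp
qed

text \<open>Bounds on the maximal curvature.  maxCurv p <= 2 n tan(pi/n) says that every exterior angle is
  at most 2 pi/n; by rigidity of unit cycles this forces p to be regular, and a strict
  inequality is impossible.\<close>

lemma kappa_le_maxCurv:
  assumes "i \<in> {1..int n}"
  shows "kappa_d (vert n p (i - 1)) (vert n p i) (vert n p (i + 1)) \<le> maxCurv n p"
  unfolding maxCurv_def using assms by (intro Max_ge) auto

lemma angles_le_of_maxCurv_le:
  fixes p :: "real \<Rightarrow> 'a::real_inner"
  assumes p: "p \<in> Pn n" and n: "n \<ge> 3" and le: "maxCurv n p \<le> ereal (regular_curvature n)"
  shows "arccos (edge_dir n p k \<bullet> edge_dir n p (k + 1)) \<le> 2 * pi / real n"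
proof -
  interpret unit_cycle n "edge_dir n p" by (rule edge_dir_unit_cycle[OF p n])
  have "arccos (edge_dir n p (i - 1) \<bullet> edge_dir n p i) \<le> 2 * pi / real n" if "i \<in> {1..int n}" for i
    using order_trans[OF kappa_le_maxCurv[OF that, of p] le] kappa_vert[OF p n, of i]
      angle_curvature_mono_iff(2)[OF n arccos_inner_range(1,2)[of "i - 1" i]] by simp
  then show ?thesis
    using n periodic_consecutive[of "edge_dir n p" n "\<lambda>u v. arccos (u \<bullet> v) \<le> 2 * pi / real n", OF periodic]
    by auto
qed

lemma maxCurv_lower_bound:
  fixes p :: "real \<Rightarrow> 'a::real_inner"
  assumes p: "p \<in> Pn n" and n: "n \<ge> 3"
  shows "ereal (regular_curvature n) \<le> maxCurv n p"
proof (rule ccontr)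
  interpret unit_cycle n "edge_dir n p" by (rule edge_dir_unit_cycle[OF p n])
  assume "\<not> ereal (regular_curvature n) \<le> maxCurv n p"
  then have less: "maxCurv n p < ereal (regular_curvature n)" by simp
  have "edge_dir n p 0 \<bullet> edge_dir n p (0 + 1) = cos (2 * pi * real_of_int 1 / real n)"
    using gram angles_le_of_maxCurv_le[OF p n] less by (meson less_imp_le)
  then have "arccos (edge_dir n p 0 \<bullet> edge_dir n p 1) = 2 * pi / real n"
    using n by (simp add: arccos_cos field_simps)
  moreover have "\<not> ereal (regular_curvature n) \<le> angle_curvature n (arccos (edge_dir n p 0 \<bullet> edge_dir n p 1))"
    using kappa_le_maxCurv[of 1 n p] kappa_vert[OF p n, of 1] less n by auto
  ultimately show False using angle_curvature_mono_iff(1)[OF n arccos_inner_range(1,2)[of 0 1]] by simp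
qed

lemma regular_of_maxCurv_le:
  fixes p :: "real \<Rightarrow> 'a::real_inner"
  assumes p: "p \<in> Pn n" and n: "n \<ge> 3" and le: "maxCurv n p \<le> ereal (regular_curvature n)"
  shows "regular_ngon n p"
proof -
  interpret unit_cycle n "edge_dir n p" by (rule edge_dir_unit_cycle[OF p n])
  obtain a b where ab: "norm a = 1" "norm b = 1" "a \<bullet> b = 0"
    and E: "\<And>k. edge_dir n p k = cos (2 * pi * real_of_int k / real n) *\<^sub>R a
                               + sin (2 * pi * real_of_int k / real n) *\<^sub>R b"
    using planar_roots_of_unity[OF angles_le_of_maxCurv_le[OF p n le]] by blast
  have "n > 0" using n by simp
  from vert_succ[OF this, of p] E
  obtain c e1 e2 where "norm e1 = 1" "norm e2 = 1" "e1 \<bullet> e2 = 0"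
    and "\<And>k. vert n p k = c + (1 / (2 * real n * sin (pi / real n))) *\<^sub>R
        (cos (2 * pi * real_of_int k / real n) *\<^sub>R e1 + sin (2 * pi * real_of_int k / real n) *\<^sub>R e2)"
    using regular_from_edge_directions[OF n ab, of "vert n p"] by metis
  then show ?thesis
    using p Pn_shift[OF p] unfolding regular_ngon_def vert_def by blast
qed

text \<open>The odd multiples of pi/n
  have cosine at most cos(pi/n): every vertex of the regular n-gon lies on the inner side of
  the supporting line of every edge.\<close>

lemma cos_le_cos_of_range:
  assumes "0 \<le> h" "h \<le> pi" "h \<le> y" "y \<le> 2 * pi - h"
  shows "cos y \<le> cos h"
proof (cases "y \<le> pi")
  case True
  then show ?thesis using assms by (intro cos_monotone_0_pi_le) auto
next
  case False
  have "cos y = cos (2 * pi - y)" by (simp add: cos_diff)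
  also have "\<dots> \<le> cos h" using assms False by (intro cos_monotone_0_pi_le) auto
  finally show ?thesis .
qed

lemma cos_odd_multiple_le:
  assumes n: "n > 0"
  shows "cos (real_of_int (2 * j - 1) * (pi / real n)) \<le> cos (pi / real n)"
proof -
  define h where "h = pi / real n"
  have h: "0 < h" "h \<le> pi" using n by (auto simp: h_def field_simps)
  define j' where "j' = j mod int n"
  have j': "0 \<le> j'" "j' < int n" using n by (simp_all add: j'_def)
  have "j = j' + int n * (j div int n)" by (simp add: j'_def)
  then have "real_of_int (2 * j - 1) = real_of_int (2 * j' - 1) + 2 * real n * real_of_int (j div int n)"
    by (metis (mono_tags, opaque_lifting) of_int_add of_int_mult of_int_of_nat_eq distrib_left mult.assoc
        of_int_numeral diff_add_eq)
  then have "real_of_int (2 * j - 1) * h = real_of_int (2 * j' - 1) * h + 2 * pi * real_of_int (j div int n)"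
    using n by (simp add: h_def field_simps)
  then have "cos (real_of_int (2 * j - 1) * h) = cos (real_of_int (2 * j' - 1) * h)" by (simp add: cos_add)
  also have "\<dots> \<le> cos h"
  proof (cases "j' = 0")
    case True
    then show ?thesis by simp
  next
    case False
    have "real_of_int (2 * j' - 1) \<le> 2 * real n - 1" using j' by linarith
    then have "real_of_int (2 * j' - 1) * h \<le> (2 * real n - 1) * h" using h by (simp add: mult_right_mono)
    also have "\<dots> = 2 * pi - h" using n by (simp add: h_def field_simps)
    finally show ?thesis using False j' h by (intro cos_le_cos_of_range) auto
  qed
  finally show ?thesis by (simp add: h_def)
qed

lemma dist_sq_along_ray:
  fixes x y d :: "'a::real_inner"
  assumes "norm d = 1"
  shows "(norm (x - (y + \<eta> *\<^sub>R d)))\<^sup>2 = (norm (x - y))\<^sup>2 + 2 * \<eta> * ((y - x) \<bullet> d) + \<eta>\<^sup>2"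
proof -
  have "x - (y + \<eta> *\<^sub>R d) = - ((y - x) + \<eta> *\<^sub>R d)" by (simp add: algebra_simps)
  then have "(norm (x - (y + \<eta> *\<^sub>R d)))\<^sup>2 = ((y - x) + \<eta> *\<^sub>R d) \<bullet> ((y - x) + \<eta> *\<^sub>R d)"
    by (simp only: norm_minus_cancel power2_norm_eq_inner)
  also have "\<dots> = (y - x) \<bullet> (y - x) + 2 * \<eta> * ((y - x) \<bullet> d) + \<eta>\<^sup>2"
  proof -
    have "d \<bullet> d = 1" using assms by (simp add: dot_square_norm)
    then show ?thesis by (simp add: inner_add_left inner_add_right inner_commute power2_eq_square algebra_simps)
  qed
  finally show ?thesis by (simp add: dot_square_norm norm_minus_commute)
qed

lemma one_sided_max:
  fixes g :: "real \<Rightarrow> 'a::real_inner"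
  assumes d: "norm d = 1" and \<delta>: "\<delta> > 0" and \<sigma>: "\<sigma> = 1 \<or> \<sigma> = -1"
    and ray: "\<And>\<eta>. 0 < \<eta> \<Longrightarrow> \<eta> < \<delta> \<Longrightarrow> g (s + \<sigma> * \<eta>) = g s + \<eta> *\<^sub>R d"
    and max: "\<exists>e>0. \<forall>u. \<bar>u - s\<bar> < e \<longrightarrow> (norm (x - g u))\<^sup>2 \<le> (norm (x - g s))\<^sup>2"
  shows "(g s - x) \<bullet> d < 0"
proof -
  obtain e where e: "e > 0" "\<And>u. \<bar>u - s\<bar> < e \<Longrightarrow> (norm (x - g u))\<^sup>2 \<le> (norm (x - g s))\<^sup>2"
    using max by blast
  define \<eta> where "\<eta> = min e \<delta> / 2"
  have \<eta>: "0 < \<eta>" "\<eta> < \<delta>" "\<bar>(s + \<sigma> * \<eta>) - s\<bar> < e" using e \<delta> \<sigma> by (auto simp: \<eta>_def)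
  have "(norm (x - (g s + \<eta> *\<^sub>R d)))\<^sup>2 \<le> (norm (x - g s))\<^sup>2"
    using e(2)[OF \<eta>(3)] ray[OF \<eta>(1,2)] by simp
  then have "\<eta> * (2 * ((g s - x) \<bullet> d) + \<eta>) \<le> 0"
    unfolding dist_sq_along_ray[OF d] by (simp add: power2_eq_square algebra_simps)
  then show ?thesis using \<eta>(1) by (simp add: mult_le_0_iff)
qed

lemma one_sided_min:
  fixes g :: "real \<Rightarrow> 'a::real_inner"
  assumes d: "norm d = 1" and \<delta>: "\<delta> > 0" and \<sigma>: "\<sigma> = 1 \<or> \<sigma> = -1"
    and ray: "\<And>\<eta>. 0 < \<eta> \<Longrightarrow> \<eta> < \<delta> \<Longrightarrow> g (s + \<sigma> * \<eta>) = g s + \<eta> *\<^sub>R d"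
    and min: "\<exists>e>0. \<forall>u. \<bar>u - s\<bar> < e \<longrightarrow> (norm (x - g s))\<^sup>2 \<le> (norm (x - g u))\<^sup>2"
  shows "0 \<le> (g s - x) \<bullet> d"
proof (rule ccontr)
  assume "\<not> 0 \<le> (g s - x) \<bullet> d"
  then have neg: "(g s - x) \<bullet> d < 0" by simp
  obtain e where e: "e > 0" "\<And>u. \<bar>u - s\<bar> < e \<Longrightarrow> (norm (x - g s))\<^sup>2 \<le> (norm (x - g u))\<^sup>2"
    using min by blast
  define \<eta> where "\<eta> = min (min e \<delta> / 2) (- ((g s - x) \<bullet> d))"
  have \<eta>: "0 < \<eta>" "\<eta> < \<delta>" "\<bar>(s + \<sigma> * \<eta>) - s\<bar> < e" "\<eta> \<le> - ((g s - x) \<bullet> d)"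
    using e \<delta> \<sigma> neg by (auto simp: \<eta>_def)
  have "(norm (x - g s))\<^sup>2 \<le> (norm (x - (g s + \<eta> *\<^sub>R d)))\<^sup>2"
    using e(2)[OF \<eta>(3)] ray[OF \<eta>(1,2)] by simp
  then have "0 \<le> \<eta> * (2 * ((g s - x) \<bullet> d) + \<eta>)"
    unfolding dist_sq_along_ray[OF d] by (simp add: power2_eq_square algebra_simps)
  moreover have "2 * ((g s - x) \<bullet> d) + \<eta> < 0" using \<eta>(4) neg by linarith
  ultimately show False using \<eta>(1) by (simp add: zero_le_mult_iff)
qed

lemma two_sided_extremum:
  fixes g :: "real \<Rightarrow> 'a::real_inner"
  assumes d: "norm d1 = 1" "norm d2 = 1" and \<delta>: "\<delta> > 0"
    and fwd: "\<And>\<eta>. 0 < \<eta> \<Longrightarrow> \<eta> < \<delta> \<Longrightarrow> g (s + 1 * \<eta>) = g s + \<eta> *\<^sub>R d1"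
    and bwd: "\<And>\<eta>. 0 < \<eta> \<Longrightarrow> \<eta> < \<delta> \<Longrightarrow> g (s + (-1) * \<eta>) = g s + \<eta> *\<^sub>R d2"
    and ext: "local_extremum (\<lambda>u. (norm (x - g u))\<^sup>2) s"
  shows "((g s - x) \<bullet> d1 < 0 \<and> (g s - x) \<bullet> d2 < 0) \<or> (0 \<le> (g s - x) \<bullet> d1 \<and> 0 \<le> (g s - x) \<bullet> d2)"
proof -
  consider (max) "\<exists>e>0. \<forall>u. \<bar>u - s\<bar> < e \<longrightarrow> (norm (x - g u))\<^sup>2 \<le> (norm (x - g s))\<^sup>2"
    | (min) "\<exists>e>0. \<forall>u. \<bar>u - s\<bar> < e \<longrightarrow> (norm (x - g s))\<^sup>2 \<le> (norm (x - g u))\<^sup>2"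
    using ext unfolding local_extremum_def by blast
  then show ?thesis
  proof cases
    case max
    then show ?thesis using one_sided_max[OF d(1) \<delta> _ fwd] one_sided_max[OF d(2) \<delta> _ bwd] by simp
  next
    case min
    then show ?thesis using one_sided_min[OF d(1) \<delta> _ fwd] one_sided_min[OF d(2) \<delta> _ bwd] by simp
  qed
qed

text \<open>In the frame (normal, tangent) of
  an edge ending at a vertex, with exterior angle 2h at the vertex, a local maximum of the
  distance at the vertex gives the first bound and a local minimum is impossible.  For the
  first, (z1, z2) = a (cos 2h, - sin 2h) + b (1, 0) with a, b > 0, so its length is at most
  a + b while z1 cos h - z2 sin h = (a + b) cos h.\<close>

lemma vertex_max_bound:
  fixes z1 z2 h :: real
  assumes h: "0 < h" "h < pi / 2" and z2: "z2 < 0" and b: "z1 * sin (2 * h) + z2 * cos (2 * h) > 0"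
  shows "z1 * cos h - z2 * sin h \<ge> cos h * sqrt (z1\<^sup>2 + z2\<^sup>2)"
proof -
  define S where "S = sin (2 * h)"
  define C where "C = cos (2 * h)"
  have S0: "S > 0" unfolding S_def using h by (intro sin_gt_zero) auto
  have CS: "C * C + S * S = 1" using sin_cos_squared_add[of "2*h"] unfolding S_def C_def power2_eq_square by linarith
  have C1: "C \<le> 1" by (simp add: C_def)
  define a where "a = - z2 / S"
  define bb where "bb = z1 - a * C"
  have a0: "a > 0" using z2 S0 by (simp add: a_def divide_neg_pos)
  have z2e: "z2 = - a * S" using S0 by (simp add: a_def)
  have z1e: "z1 = bb + a * C" by (simp add: bb_def)
  have "bb * S = z1 * S + z2 * C" using S0 by (simp add: bb_def a_def field_simps)
  then have "bb * S > 0" using b unfolding S_def C_def by simp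
  then have b0: "bb > 0" using S0 by (simp add: zero_less_mult_iff)
  have lhs: "z1 * cos h - z2 * sin h = (a + bb) * cos h"
  proof -
    have e: "C * cos h + S * sin h = cos h" unfolding C_def S_def using cos_diff[of "2*h" h] by simp
    have "z1 * cos h - z2 * sin h = bb * cos h + a * (C * cos h + S * sin h)"
      unfolding z1e z2e by (simp add: algebra_simps)
    then show ?thesis unfolding e by (simp add: algebra_simps)
  qed
  have "z1\<^sup>2 + z2\<^sup>2 = a * a * (C * C + S * S) + bb * bb + 2 * (a * bb * C)"
    unfolding z1e z2e by (simp add: power2_eq_square algebra_simps)
  also have "\<dots> \<le> (a + bb)\<^sup>2"
  proof -
    have "a * bb * C \<le> a * bb" using mult_left_le[OF C1, of "a * bb"] a0 b0 by simp
    then show ?thesis unfolding CS by (simp add: power2_eq_square algebra_simps)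
  qed
  finally have "sqrt (z1\<^sup>2 + z2\<^sup>2) \<le> sqrt ((a + bb)\<^sup>2)" by (rule real_sqrt_le_mono)
  also have "\<dots> = a + bb" using a0 b0 by simp
  finally have sq: "sqrt (z1\<^sup>2 + z2\<^sup>2) \<le> a + bb" .
  have "cos h > 0" using h by (intro cos_gt_zero) auto
  then have "cos h * sqrt (z1\<^sup>2 + z2\<^sup>2) \<le> cos h * (a + bb)" using sq by (intro mult_left_mono) auto
  then show ?thesis unfolding lhs by (simp add: mult.commute)
qed

lemma vertex_min_zero:
  fixes z1 z2 S C :: real
  assumes S0: "S > 0" and "z2 \<ge> 0" "z1 * S + z2 * C \<le> 0" "z1 \<ge> 0" "z1 * C - z2 * S \<ge> 0"
  shows "z1 = 0 \<and> z2 = 0"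
proof -
  have "S * (z1 * z1 + z2 * z2) = z1 * (z1 * S + z2 * C) - z2 * (z1 * C - z2 * S)" by (simp add: algebra_simps)
  also have "\<dots> \<le> 0"
  proof -
    have t1: "z1 * (z1 * S + z2 * C) \<le> 0" using assms by (intro mult_nonneg_nonpos) auto
    have t2: "z2 * (z1 * C - z2 * S) \<ge> 0" using assms by (intro mult_nonneg_nonneg) auto
    show ?thesis using t1 t2 by linarith
  qed
  finally have "z1 * z1 + z2 * z2 \<le> 0" using S0 by (simp add: mult_le_0_iff)
  then show ?thesis by (simp add: sum_squares_le_zero_iff)
qed

text \<open>Edge k has outer unit
  normal nv (ang k) and unit tangent tv (ang k); its distance from c is the inradius r and
  the vertices have distance R (circumradius) from c.\<close>

locale regular_polygon =
  fixes n :: nat and q :: "real \<Rightarrow> 'a::real_inner" and t0 :: real and c e1 e2 :: 'a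
  assumes n3: "n \<ge> 3" and member: "q \<in> Pn n" and shift: "poly_shift n q t0"
    and ne1: "norm e1 = 1" and ne2: "norm e2 = 1" and e12: "e1 \<bullet> e2 = 0"
    and vertices: "\<And>k::int. q (t0 + of_int k / real n) = c + (1 / (2 * real n * sin (pi / real n))) *\<^sub>R
               (cos (2 * pi * of_int k / real n) *\<^sub>R e1 + sin (2 * pi * of_int k / real n) *\<^sub>R e2)"
begin

text \<open>h is half the exterior angle; pl a b is the vector with coordinates (a, b) in the frame
  e1, e2; V k is vertex k and ang k the direction of the outer normal of edge k.\<close>

definition h :: real where "h = pi / real n"
definition R :: real where "R = 1 / (2 * real n * sin h)"
definition r :: real where "r = R * cos h"
definition pl :: "real \<Rightarrow> real \<Rightarrow> 'a" where "pl a b = a *\<^sub>R e1 + b *\<^sub>R e2"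
definition nv :: "real \<Rightarrow> 'a" where "nv a = pl (cos a) (sin a)"
definition tv :: "real \<Rightarrow> 'a" where "tv a = pl (- sin a) (cos a)"
definition ang :: "int \<Rightarrow> real" where "ang k = 2 * pi * real_of_int k / real n + h"
definition V :: "int \<Rightarrow> 'a" where "V k = q (t0 + of_int k / real n)"
definition in_plane :: "'a \<Rightarrow> bool" where "in_plane u \<longleftrightarrow> (\<exists>a b. u = pl a b)"

lemma n0: "real n > 0" using n3 by simp

lemma hpos: "0 < h" "h < pi / 2" using n3 by (auto simp: h_def field_simps)

lemma sin_h_pos: "sin h > 0" using hpos by (intro sin_gt_zero) auto
lemma cos_h_pos: "cos h > 0" using hpos by (intro cos_gt_zero) auto

lemma Rpos: "R > 0" using sin_h_pos n0 by (simp add: R_def)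

lemma inradius_eq: "r = 1 / regular_curvature n"
  using sin_h_pos cos_h_pos n0 by (simp add: r_def R_def h_def[symmetric] regular_curvature_def tan_def field_simps)

lemma pl_inner: "pl a b \<bullet> pl a' b' = a * a' + b * b'"
proof -
  have "e1 \<bullet> e1 = 1" "e2 \<bullet> e2 = 1" "e2 \<bullet> e1 = 0"
    using ne1 ne2 e12 by (simp_all add: dot_square_norm inner_commute)
  then show ?thesis by (simp add: pl_def inner_add_left inner_add_right e12)
qed

lemma pl_add: "pl a b + pl a' b' = pl (a + a') (b + b')"
  by (simp add: pl_def algebra_simps)
lemma pl_diff: "pl a b - pl a' b' = pl (a - a') (b - b')"
  by (simp add: pl_def algebra_simps)
lemma pl_scale: "t *\<^sub>R pl a b = pl (t * a) (t * b)"
  by (simp add: pl_def algebra_simps)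

lemma nv_nv: "nv a \<bullet> nv b = cos (a - b)" by (simp add: nv_def pl_inner cos_diff)
lemma nv_tv: "nv a \<bullet> tv b = sin (a - b)" by (simp add: nv_def tv_def pl_inner sin_diff algebra_simps)
lemma tv_nv: "tv a \<bullet> nv b = sin (b - a)" by (simp add: nv_def tv_def pl_inner sin_diff algebra_simps)
lemma tv_tv: "tv a \<bullet> tv b = cos (a - b)" by (simp add: nv_def tv_def pl_inner cos_diff algebra_simps)

lemma norm_tv: "norm (tv a) = 1" using tv_tv[of a a] by (simp add: norm_eq_1)

lemma in_plane_nv: "in_plane (nv a)" and in_plane_tv: "in_plane (tv a)"
  by (auto simp: in_plane_def nv_def tv_def)

lemma in_plane_diff: "in_plane u \<Longrightarrow> in_plane v \<Longrightarrow> in_plane (u - v)"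
  unfolding in_plane_def by (metis pl_diff)

lemma inner_in_frame:
  assumes "in_plane u" "in_plane v"
  shows "u \<bullet> v = (u \<bullet> nv \<phi>) * (v \<bullet> nv \<phi>) + (u \<bullet> tv \<phi>) * (v \<bullet> tv \<phi>)"
proof -
  obtain a b a' b' where uv: "u = pl a b" "v = pl a' b'" using assms by (auto simp: in_plane_def)
  have e: "cos \<phi> * cos \<phi> + sin \<phi> * sin \<phi> = 1"
    using sin_cos_squared_add[of \<phi>] unfolding power2_eq_square by linarith
  have "(a * cos \<phi> + b * sin \<phi>) * (a' * cos \<phi> + b' * sin \<phi>) + (a * (- sin \<phi>) + b * cos \<phi>) * (a' * (- sin \<phi>) + b' * cos \<phi>)
     = a * a' * (cos \<phi> * cos \<phi> + sin \<phi> * sin \<phi>) + b * b' * (cos \<phi> * cos \<phi> + sin \<phi> * sin \<phi>)" by algebra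
  then show ?thesis unfolding uv nv_def tv_def pl_inner e by simp
qed

lemma V_eq: "V k = c + R *\<^sub>R nv (ang k - h)"
  using vertices[of k] by (simp add: V_def R_def h_def nv_def pl_def ang_def)

lemma ang_prev: "ang (k - 1) = ang k - 2 * h"
  unfolding ang_def h_def using n0 by (simp add: field_simps)

lemma edge: "V (k + 1) - V k = (1 / real n) *\<^sub>R tv (ang k)"
proof -
  define A where "A = ang k"
  have a1: "ang (k + 1) - h = A + h" unfolding A_def ang_def using n0 by (simp add: h_def field_simps)
  have "V (k + 1) - V k = R *\<^sub>R (nv (A + h) - nv (A - h))" unfolding V_eq a1 A_def by (simp add: algebra_simps)
  also have "nv (A + h) - nv (A - h) = (2 * sin h) *\<^sub>R tv A"
    unfolding nv_def tv_def pl_diff pl_scale by (simp add: cos_add cos_diff sin_add sin_diff algebra_simps)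
  also have "R *\<^sub>R ((2 * sin h) *\<^sub>R tv A) = (1 / real n) *\<^sub>R tv A"
    using sin_h_pos n0 by (simp add: R_def)
  finally show ?thesis by (simp add: A_def)
qed

lemma V_nv: "(V k - c) \<bullet> nv (ang k) = r"
  unfolding V_eq by (simp add: nv_nv r_def)
lemma V_tv: "(V k - c) \<bullet> tv (ang k) = - R * sin h"
  unfolding V_eq by (simp add: nv_tv)
lemma V_nv_prev: "(V k - c) \<bullet> nv (ang (k - 1)) = r"
  unfolding V_eq ang_prev by (simp add: nv_nv r_def)

lemma point_rep:
  "\<exists>k \<sigma>. 0 \<le> \<sigma> \<and> \<sigma> < 1 \<and> t = t0 + (of_int k + \<sigma>) / real n"
proof -
  define k where "k = \<lfloor>real n * (t - t0)\<rfloor>"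
  define \<sigma> where "\<sigma> = real n * (t - t0) - of_int k"
  have "0 \<le> \<sigma>" "\<sigma> < 1" unfolding \<sigma>_def k_def by linarith+
  moreover have "t = t0 + (of_int k + \<sigma>) / real n" using n0 by (simp add: \<sigma>_def field_simps)
  ultimately show ?thesis by blast
qed

lemma on_edge_convex:
  assumes "0 \<le> \<sigma>" "\<sigma> \<le> 1"
  shows "q (t0 + (of_int k + \<sigma>) / real n) = (1 - \<sigma>) *\<^sub>R V k + \<sigma> *\<^sub>R V (k + 1)"
proof -
  have "\<sigma> \<in> {0..1}" using assms by simp
  then have "q (t0 + (of_int k + \<sigma>) / real n) =
              (1 - \<sigma>) *\<^sub>R q (t0 + of_int k / real n) + \<sigma> *\<^sub>R q (t0 + (of_int k + 1) / real n)"
    using shift unfolding poly_shift_def by blast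
  then show ?thesis unfolding V_def by simp
qed

lemma on_edge:
  assumes "0 \<le> \<sigma>" "\<sigma> \<le> 1"
  shows "q (t0 + (of_int k + \<sigma>) / real n) = V k + (\<sigma> / real n) *\<^sub>R tv (ang k)"
proof -
  have "q (t0 + (of_int k + \<sigma>) / real n) = V k + \<sigma> *\<^sub>R (V (k + 1) - V k)"
    using on_edge_convex[OF assms] by (simp add: algebra_simps)
  then show ?thesis unfolding edge by simp
qed

lemma q_in_plane: "in_plane (q t - c)"
proof -
  obtain k \<sigma> where ks: "0 \<le> \<sigma>" "\<sigma> < 1" "t = t0 + (of_int k + \<sigma>) / real n" using point_rep by blast
  have "q t - c = R *\<^sub>R nv (ang k - h) + (\<sigma> / real n) *\<^sub>R tv (ang k)"
    using on_edge[of \<sigma> k] ks V_eq by simp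
  then show ?thesis unfolding in_plane_def nv_def tv_def pl_scale pl_add by blast
qed

lemma V_below_edge_line: "(V m - c) \<bullet> nv (ang k) \<le> r"
proof -
  have "(V m - c) \<bullet> nv (ang k) = R * cos (ang m - h - ang k)" unfolding V_eq by (simp add: nv_nv)
  also have "ang m - h - ang k = real_of_int (2 * (m - k) - 1) * h"
    unfolding ang_def h_def using n0 by (simp add: field_simps)
  also have "R * cos (real_of_int (2 * (m - k) - 1) * h) \<le> R * cos h"
    using cos_odd_multiple_le[of n "m - k"] n0 Rpos by (simp add: h_def)
  finally show ?thesis by (simp add: r_def)
qed

lemma below_edge_line: "(q t - c) \<bullet> nv (ang k) \<le> r"
proof -
  obtain m \<sigma> where ms: "0 \<le> \<sigma>" "\<sigma> < 1" "t = t0 + (of_int m + \<sigma>) / real n" using point_rep by blast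
  then have "q t - c = (1 - \<sigma>) *\<^sub>R (V m - c) + \<sigma> *\<^sub>R (V (m + 1) - c)"
    using on_edge_convex[of \<sigma> m] by (simp add: algebra_simps)
  then have "(q t - c) \<bullet> nv (ang k) = (1 - \<sigma>) * ((V m - c) \<bullet> nv (ang k)) + \<sigma> * ((V (m + 1) - c) \<bullet> nv (ang k))"
    by (simp add: inner_add_left)
  also have "\<dots> \<le> (1 - \<sigma>) * r + \<sigma> * r"
    using ms V_below_edge_line[of m k] V_below_edge_line[of "m + 1" k] by (intro add_mono mult_left_mono) auto
  finally show ?thesis by (simp add: algebra_simps)
qed


lemma move_forward:
  assumes \<sigma>: "0 \<le> \<sigma>" "\<sigma> < 1" and s: "s = t0 + (of_int k + \<sigma>) / real n"
    and \<eta>: "0 < \<eta>" "\<eta> < (1 - \<sigma>) / real n"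
  shows "q (s + 1 * \<eta>) = q s + \<eta> *\<^sub>R tv (ang k)"
proof -
  have e: "s + 1 * \<eta> = t0 + (of_int k + (\<sigma> + real n * \<eta>)) / real n" using s n0 by (simp add: field_simps)
  have "0 \<le> \<sigma> + real n * \<eta>" "\<sigma> + real n * \<eta> \<le> 1" using \<sigma> \<eta> n0 by (auto simp: field_simps)
  then have "q (s + 1 * \<eta>) = V k + ((\<sigma> + real n * \<eta>) / real n) *\<^sub>R tv (ang k)"
    unfolding e by (rule on_edge)
  also have "\<dots> = (V k + (\<sigma> / real n) *\<^sub>R tv (ang k)) + \<eta> *\<^sub>R tv (ang k)"
    using n0 by (simp add: add_divide_distrib scaleR_add_left)
  also have "V k + (\<sigma> / real n) *\<^sub>R tv (ang k) = q s" using on_edge \<sigma> s by simp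
  finally show ?thesis .
qed

lemma move_backward_edge:
  assumes \<sigma>: "0 < \<sigma>" "\<sigma> < 1" and s: "s = t0 + (of_int k + \<sigma>) / real n"
    and \<eta>: "0 < \<eta>" "\<eta> < \<sigma> / real n"
  shows "q (s + (-1) * \<eta>) = q s + \<eta> *\<^sub>R (- tv (ang k))"
proof -
  have e: "s + (-1) * \<eta> = t0 + (of_int k + (\<sigma> - real n * \<eta>)) / real n" using s n0 by (simp add: field_simps)
  have "0 < real n * \<eta>" "real n * \<eta> < \<sigma>" using \<eta> n0 by (simp_all add: field_simps)
  then have "0 \<le> \<sigma> - real n * \<eta>" "\<sigma> - real n * \<eta> \<le> 1" using \<sigma> by linarith+
  then have "q (s + (-1) * \<eta>) = V k + ((\<sigma> - real n * \<eta>) / real n) *\<^sub>R tv (ang k)"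
    unfolding e by (rule on_edge)
  also have "\<dots> = (V k + (\<sigma> / real n) *\<^sub>R tv (ang k)) + \<eta> *\<^sub>R (- tv (ang k))"
    using n0 by (simp add: diff_divide_distrib scaleR_diff_left)
  also have "V k + (\<sigma> / real n) *\<^sub>R tv (ang k) = q s" using on_edge \<sigma> s by simp
  finally show ?thesis .
qed

lemma move_backward_vertex:
  assumes s: "s = t0 + of_int k / real n" and \<eta>: "0 < \<eta>" "\<eta> < 1 / real n"
  shows "q (s + (-1) * \<eta>) = q s + \<eta> *\<^sub>R (- tv (ang (k - 1)))"
proof -
  have e: "s + (-1) * \<eta> = t0 + (of_int (k - 1) + (1 - real n * \<eta>)) / real n" using s n0 by (simp add: field_simps)
  have "0 \<le> 1 - real n * \<eta>" "1 - real n * \<eta> \<le> 1" using \<eta> n0 by (auto simp: field_simps)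
  then have "q (s + (-1) * \<eta>) = V (k - 1) + ((1 - real n * \<eta>) / real n) *\<^sub>R tv (ang (k - 1))"
    unfolding e by (rule on_edge)
  also have "\<dots> = (V (k - 1) + (1 / real n) *\<^sub>R tv (ang (k - 1))) + \<eta> *\<^sub>R (- tv (ang (k - 1)))"
    using n0 by (simp add: diff_divide_distrib scaleR_diff_left)
  also have "V (k - 1) + (1 / real n) *\<^sub>R tv (ang (k - 1)) = q s"
    using edge[of "k - 1"] s by (simp add: V_def algebra_simps)
  finally show ?thesis .
qed

text \<open>Inside an edge
  q s - x is orthogonal to the edge; at a vertex a local minimum is impossible and a local
  maximum forces q s - x into the cone between the two edge normals.\<close>

lemma extremum_inside_edge:
  assumes \<sigma>: "0 < \<sigma>" "\<sigma> < 1" and s: "s = t0 + (of_int k + \<sigma>) / real n"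
    and ext: "local_extremum (\<lambda>u. (norm (x - q u))\<^sup>2) s" and x: "x = q t"
  shows "r * norm (q s - x) \<le> (q s - x) \<bullet> (q s - c)"
proof -
  define \<phi> where "\<phi> = ang k"
  define w where "w = q s - x"
  define \<delta> where "\<delta> = min (\<sigma> / real n) ((1 - \<sigma>) / real n)"
  have \<delta>: "0 < \<delta>" using \<sigma> n0 by (simp add: \<delta>_def)
  have "(w \<bullet> tv \<phi> < 0 \<and> w \<bullet> (- tv \<phi>) < 0) \<or> (0 \<le> w \<bullet> tv \<phi> \<and> 0 \<le> w \<bullet> (- tv \<phi>))"
    unfolding w_def
  proof (rule two_sided_extremum[OF norm_tv _ \<delta> _ _ ext])
    show "norm (- tv \<phi>) = 1" by (simp add: norm_tv)
    show "q (s + 1 * \<eta>) = q s + \<eta> *\<^sub>R tv \<phi>" if "0 < \<eta>" "\<eta> < \<delta>" for \<eta>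
      using move_forward[OF _ _ s, of \<eta>] \<sigma> that by (simp add: \<phi>_def \<delta>_def)
    show "q (s + (-1) * \<eta>) = q s + \<eta> *\<^sub>R (- tv \<phi>)" if "0 < \<eta>" "\<eta> < \<delta>" for \<eta>
      using move_backward_edge[OF \<sigma> s, of \<eta>] that by (simp add: \<phi>_def \<delta>_def)
  qed
  then have wt: "w \<bullet> tv \<phi> = 0" by auto
  have wp: "in_plane w" unfolding w_def x using in_plane_diff[OF q_in_plane q_in_plane] by simp
  have yn: "(q s - c) \<bullet> nv \<phi> = r"
  proof -
    have e: "q s - c = (V k - c) + (\<sigma> / real n) *\<^sub>R tv \<phi>" using on_edge \<sigma> s by (simp add: \<phi>_def)
    show ?thesis unfolding e inner_add_left inner_scaleR_left using V_nv[of k] by (simp add: tv_nv \<phi>_def)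
  qed
  have wn: "0 \<le> w \<bullet> nv \<phi>"
    using yn below_edge_line[of t k] unfolding w_def x \<phi>_def by (simp add: inner_diff_left)
  have "w \<bullet> w = (w \<bullet> nv \<phi>)\<^sup>2" using inner_in_frame[OF wp wp, of \<phi>] wt by (simp add: power2_eq_square)
  then have "norm w = w \<bullet> nv \<phi>" using wn by (simp add: norm_eq_sqrt_inner)
  moreover have "w \<bullet> (q s - c) = (w \<bullet> nv \<phi>) * r" using inner_in_frame[OF wp q_in_plane[of s], of \<phi>] wt yn by simp
  ultimately show ?thesis by (simp add: w_def mult.commute)
qed

text \<open>Coordinates at vertex k in the frame of edge k: the normal and tangent of edge k - 1
  are those of edge k turned by the exterior angle 2 h.\<close>

lemma vertex_coordinates:
  assumes wp: "in_plane w"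
  shows "w \<bullet> tv (ang (k - 1)) = (w \<bullet> nv (ang k)) * sin (2 * h) + (w \<bullet> tv (ang k)) * cos (2 * h)"
    and "w \<bullet> nv (ang (k - 1)) = (w \<bullet> nv (ang k)) * cos (2 * h) - (w \<bullet> tv (ang k)) * sin (2 * h)"
    and "w \<bullet> (V k - c) = R * ((w \<bullet> nv (ang k)) * cos h - (w \<bullet> tv (ang k)) * sin h)"
    and "norm w = sqrt ((w \<bullet> nv (ang k))\<^sup>2 + (w \<bullet> tv (ang k))\<^sup>2)"
proof -
  show "w \<bullet> tv (ang (k - 1)) = (w \<bullet> nv (ang k)) * sin (2 * h) + (w \<bullet> tv (ang k)) * cos (2 * h)"
    using inner_in_frame[OF wp in_plane_tv, of "ang (k - 1)" "ang k"] by (simp add: ang_prev tv_nv tv_tv)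
  show "w \<bullet> nv (ang (k - 1)) = (w \<bullet> nv (ang k)) * cos (2 * h) - (w \<bullet> tv (ang k)) * sin (2 * h)"
    using inner_in_frame[OF wp in_plane_nv, of "ang (k - 1)" "ang k"] by (simp add: ang_prev nv_nv nv_tv)
  have "w \<bullet> (V k - c) = (w \<bullet> nv (ang k)) * ((V k - c) \<bullet> nv (ang k)) + (w \<bullet> tv (ang k)) * ((V k - c) \<bullet> tv (ang k))"
    using inner_in_frame[OF wp q_in_plane, of "t0 + of_int k / real n" "ang k"] by (simp add: V_def)
  then show "w \<bullet> (V k - c) = R * ((w \<bullet> nv (ang k)) * cos h - (w \<bullet> tv (ang k)) * sin h)"
    unfolding V_nv V_tv by (simp add: r_def algebra_simps)
  show "norm w = sqrt ((w \<bullet> nv (ang k))\<^sup>2 + (w \<bullet> tv (ang k))\<^sup>2)"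
    using inner_in_frame[OF wp wp, of "ang k"] by (simp add: norm_eq_sqrt_inner power2_eq_square)
qed

lemma extremum_at_vertex:
  assumes s: "s = t0 + of_int k / real n"
    and ext: "local_extremum (\<lambda>u. (norm (x - q u))\<^sup>2) s" and x: "x = q t" and ne: "x \<noteq> q s"
  shows "r * norm (q s - x) \<le> (q s - x) \<bullet> (q s - c)"
proof -
  define \<phi> where "\<phi> = ang k"
  define \<psi> where "\<psi> = ang (k - 1)"
  define w where "w = q s - x"
  define z1 where "z1 = w \<bullet> nv \<phi>"
  define z2 where "z2 = w \<bullet> tv \<phi>"
  have y: "q s = V k" using s by (simp add: V_def)
  have wp: "in_plane w" unfolding w_def x using in_plane_diff[OF q_in_plane q_in_plane] by simp
  have sign: "(z2 < 0 \<and> w \<bullet> (- tv \<psi>) < 0) \<or> (0 \<le> z2 \<and> 0 \<le> w \<bullet> (- tv \<psi>))"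
    unfolding z2_def w_def
  proof (rule two_sided_extremum[OF norm_tv _ _ _ _ ext])
    show "norm (- tv \<psi>) = 1" by (simp add: norm_tv)
    show "0 < 1 / real n" using n0 by simp
    show "q (s + 1 * \<eta>) = q s + \<eta> *\<^sub>R tv \<phi>" if "0 < \<eta>" "\<eta> < 1 / real n" for \<eta>
      using move_forward[of 0 s k \<eta>] s that by (simp add: \<phi>_def)
    show "q (s + (-1) * \<eta>) = q s + \<eta> *\<^sub>R (- tv \<psi>)" if "0 < \<eta>" "\<eta> < 1 / real n" for \<eta>
      using move_backward_vertex[OF s that] by (simp add: \<psi>_def)
  qed
  have w_tv\<psi>: "w \<bullet> tv \<psi> = z1 * sin (2 * h) + z2 * cos (2 * h)"
    and w_nv\<psi>: "w \<bullet> nv \<psi> = z1 * cos (2 * h) - z2 * sin (2 * h)"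
    and w_y: "w \<bullet> (q s - c) = R * (z1 * cos h - z2 * sin h)"
    and nw: "norm w = sqrt (z1\<^sup>2 + z2\<^sup>2)"
    using vertex_coordinates[OF wp, of k] by (simp_all add: z1_def z2_def \<phi>_def \<psi>_def y)
  from sign show ?thesis
  proof
    assume max: "z2 < 0 \<and> w \<bullet> (- tv \<psi>) < 0"
    then have "cos h * sqrt (z1\<^sup>2 + z2\<^sup>2) \<le> z1 * cos h - z2 * sin h"
      using hpos w_tv\<psi> by (intro vertex_max_bound) auto
    then have "R * (cos h * sqrt (z1\<^sup>2 + z2\<^sup>2)) \<le> R * (z1 * cos h - z2 * sin h)"
      using Rpos by simp
    then show ?thesis unfolding w_def[symmetric] w_y nw r_def by (simp add: mult.assoc)
  next
    assume min: "0 \<le> z2 \<and> 0 \<le> w \<bullet> (- tv \<psi>)"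
    have "0 \<le> z1"
      using V_nv[of k] below_edge_line[of t k] unfolding z1_def w_def x y \<phi>_def by (simp add: inner_diff_left)
    moreover have "0 \<le> z1 * cos (2 * h) - z2 * sin (2 * h)"
      using V_nv_prev[of k] below_edge_line[of t "k - 1"] w_nv\<psi>
      unfolding w_def x y \<psi>_def by (simp add: inner_diff_left)
    moreover have "sin (2 * h) > 0" using hpos by (intro sin_gt_zero) auto
    ultimately have "z1 = 0 \<and> z2 = 0"
      using min w_tv\<psi> by (intro vertex_min_zero) auto
    then have "w = 0" using nw by simp
    then show ?thesis using ne by (simp add: w_def)
  qed
qed

lemma extremum_bound:
  assumes ne: "q t \<noteq> q s" and ext: "local_extremum (\<lambda>u. (norm (q t - q u))\<^sup>2) s"
  shows "r * norm (q s - q t) \<le> (q s - q t) \<bullet> (q s - c)"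
proof -
  obtain k \<sigma> where \<sigma>: "0 \<le> \<sigma>" "\<sigma> < 1" and s: "s = t0 + (of_int k + \<sigma>) / real n"
    using point_rep by blast
  show ?thesis
  proof (cases "\<sigma> = 0")
    case True
    then have "s = t0 + of_int k / real n" using s by simp
    from extremum_at_vertex[OF this ext refl ne] show ?thesis .
  next
    case False
    then show ?thesis using extremum_inside_edge[OF _ _ s ext refl] \<sigma> by simp
  qed
qed

text \<open>Adding the estimate at both ends of a distance-critical pair (x, y) gives
  2 r |x - y| <= |x - y|^2, so dcsd q >= 2 r.\<close>

lemma dcsd_ge: "ereal (2 * r) \<le> dcsd q"
  unfolding dcsd_def
proof (rule INF_greatest)
  fix xy assume "xy \<in> dcrit q"
  then obtain t s where xy: "xy = (q t, q s)" and ne: "q t \<noteq> q s"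
    and ext_s: "local_extremum (\<lambda>u. (norm (q t - q u))\<^sup>2) s"
    and ext_t: "local_extremum (\<lambda>v. (norm (q v - q s))\<^sup>2) t"
    unfolding dcrit_def by blast
  have ext_t': "local_extremum (\<lambda>u. (norm (q s - q u))\<^sup>2) t"
    using ext_t by (simp add: norm_minus_commute)
  define w where "w = q s - q t"
  have "r * norm w \<le> w \<bullet> (q s - c)" using extremum_bound[OF ne ext_s] by (simp add: w_def)
  moreover have "r * norm w \<le> (- w) \<bullet> (q t - c)"
    using extremum_bound[OF ne[symmetric] ext_t'] by (simp add: w_def norm_minus_commute)
  moreover have "w \<bullet> (q s - c) + (- w) \<bullet> (q t - c) = norm w * norm w"
  proof -
    have "w \<bullet> (q s - c) + (- w) \<bullet> (q t - c) = w \<bullet> ((q s - c) - (q t - c))"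
      by (simp add: inner_diff_right)
    also have "(q s - c) - (q t - c) = w" by (simp add: w_def)
    finally show ?thesis by (simp add: dot_square_norm power2_eq_square)
  qed
  ultimately have "2 * r * norm w \<le> norm w * norm w" by linarith
  moreover have "norm w > 0" using ne by (simp add: w_def)
  ultimately have "2 * r \<le> norm w" by simp
  then show "ereal (2 * r) \<le> ereal (norm (fst xy - snd xy))"
    using xy by (simp add: w_def norm_minus_commute)
qed


text \<open>Every admissible parameter shift of q is t0 up to a whole number of edges: a shift
  falling strictly inside an edge would make q affine across the vertex V 1, which is
  impossible since the adjacent edges are not parallel.\<close>

lemma shift_aligned:
  assumes ps: "poly_shift n q t1"
  shows "\<exists>j. t1 = t0 + of_int j / real n"
proof (rule ccontr)
  assume not_aligned: "\<nexists>j. t1 = t0 + of_int j / real n"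
  define j where "j = \<lfloor>real n * (t1 - t0)\<rfloor>"
  define \<sigma> where "\<sigma> = real n * (t1 - t0) - of_int j"
  have \<sigma>: "0 \<le> \<sigma>" "\<sigma> < 1" unfolding \<sigma>_def j_def by linarith+
  have t1: "t1 = t0 + (of_int j + \<sigma>) / real n" using n0 by (simp add: \<sigma>_def field_simps)
  then have \<sigma>0: "\<sigma> > 0" using not_aligned \<sigma> by fastforce
  have on_shifted_edge: "q (t0 + (\<sigma> + s) / real n) =
      (1 - s) *\<^sub>R q (t0 + \<sigma> / real n) + s *\<^sub>R q (t0 + (\<sigma> + 1) / real n)" if "s \<in> {0..1}" for s
  proof -
    have e: "t1 + (of_int (- j) + u) / real n = t0 + (\<sigma> + u) / real n" for u
      using t1 n0 by (simp add: field_simps)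
    have "q (t1 + (of_int (- j) + s) / real n) = (1 - s) *\<^sub>R q (t1 + of_int (- j) / real n)
        + s *\<^sub>R q (t1 + (of_int (- j) + 1) / real n)"
      using ps that unfolding poly_shift_def by blast
    then show ?thesis using e[of s] e[of 0] e[of 1] by simp
  qed
  define D0 where "D0 = tv (ang 0)"
  define D1 where "D1 = tv (ang 1)"
  have P: "q (t0 + \<sigma> / real n) = V 1 - ((1 - \<sigma>) / real n) *\<^sub>R D0"
    using on_edge[of \<sigma> 0] edge[of 0] \<sigma> unfolding D0_def by (simp add: algebra_simps diff_divide_distrib)
  have Q: "q (t0 + (\<sigma> + 1) / real n) = V 1 + (\<sigma> / real n) *\<^sub>R D1"
    using on_edge[of \<sigma> 1] \<sigma> unfolding D1_def by (simp add: add.commute)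
  have "V 1 = \<sigma> *\<^sub>R q (t0 + \<sigma> / real n) + (1 - \<sigma>) *\<^sub>R q (t0 + (\<sigma> + 1) / real n)"
    using on_shifted_edge[of "1 - \<sigma>"] \<sigma> by (simp add: V_def)
  also have "\<dots> = V 1 + (\<sigma> * (1 - \<sigma>) / real n) *\<^sub>R (D1 - D0)"
    unfolding P Q by (simp add: algebra_simps)
  finally have "D1 = D0" using \<sigma> \<sigma>0 n0 by simp
  then have "cos (2 * h) = 1" using tv_tv[of "ang 0" "ang 1"] norm_tv[of "ang 0"] ang_prev[of 1]
    by (simp add: D0_def D1_def norm_eq_1)
  moreover have "cos (2 * h) < cos 0" using hpos by (intro cos_monotone_0_pi) auto
  ultimately show False by simp
qed

lemma vert_shift: "\<exists>j. \<forall>k. vert n q k = V (k + j)"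
proof -
  obtain j where "(SOME t. poly_shift n q t) = t0 + of_int j / real n"
    using shift_aligned[OF someI[of "poly_shift n q", OF shift]] by blast
  then have "vert n q k = V (k + j)" for k unfolding vert_def V_def using n0 by (simp add: field_simps)
  then show ?thesis by blast
qed

lemma edge_dir_regular: "\<exists>j. \<forall>k. edge_dir n q k = tv (ang (k + j))"
proof -
  obtain j where j: "\<And>k. vert n q k = V (k + j)" using vert_shift by blast
  have "edge_dir n q k = tv (ang (k + j))" for k
    using edge[of "k + j"] j[of k] j[of "k + 1"] n0 by (simp add: edge_dir_def algebra_simps)
  then show ?thesis by blast
qed

lemma kappa_regular:
  "kappa_d (vert n q (i - 1)) (vert n q i) (vert n q (i + 1)) = ereal (regular_curvature n)"
proof -
  obtain j where j: "\<And>k. edge_dir n q k = tv (ang (k + j))" using edge_dir_regular by blast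
  have "ang (i - 1 + j) = ang (i + j) - 2 * h" using ang_prev[of "i + j"] by (simp add: algebra_simps)
  then have "edge_dir n q (i - 1) \<bullet> edge_dir n q i = cos (2 * h)" by (simp add: j tv_tv)
  moreover have "arccos (cos (2 * h)) = 2 * h" using hpos by (intro arccos_cos) auto
  moreover have "2 * h \<noteq> pi" using hpos by simp
  ultimately show ?thesis
    using kappa_vert[OF member n3, of i] by (simp add: angle_curvature_def regular_curvature_def h_def)
qed

lemma V_inj:
  assumes "V a = V b" "\<bar>a - b\<bar> < int n"
  shows "a = b"
proof -
  have "nv (ang a - h) = nv (ang b - h)" using assms(1) Rpos unfolding V_eq by simp
  then have "cos ((ang a - h) - (ang b - h)) = 1"
    using nv_nv[of "ang a - h" "ang b - h"] nv_nv[of "ang b - h" "ang b - h"] by simp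
  then obtain m :: int where m: "(ang a - h) - (ang b - h) = of_int m * 2 * pi"
    by (auto simp: cos_one_2pi_int)
  have "(ang a - h) - (ang b - h) = 2 * pi * real_of_int (a - b) / real n"
    unfolding ang_def by (simp add: diff_divide_distrib right_diff_distrib)
  with m have "2 * pi * real_of_int (a - b) = 2 * pi * (real_of_int m * real n)"
    using n0 by (simp add: field_simps)
  then have "real_of_int (a - b) = real_of_int m * real n" by simp
  then have ab: "a - b = m * int n" by (metis of_int_eq_iff of_int_mult of_int_of_nat_eq)
  have "m = 0"
  proof (rule ccontr)
    assume "m \<noteq> 0"
    then have "1 * int n \<le> \<bar>m\<bar> * int n" by (intro mult_right_mono) auto
    then show False using ab assms(2) by (simp add: abs_mult)
  qed
  then show ?thesis using ab by simp
qed

lemma inj_regular: "inj_on (vert n q) {1..int n}"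
proof (rule inj_onI)
  obtain j where j: "\<And>k. vert n q k = V (k + j)" using vert_shift by blast
  fix a b assume ab: "a \<in> {1..int n}" "b \<in> {1..int n}" "vert n q a = vert n q b"
  have "a + j = b + j" using ab by (intro V_inj) (auto simp: j)
  then show "a = b" by simp
qed

lemma maxCurv_regular: "maxCurv n q = ereal (regular_curvature n)"
proof -
  have "{1..int n} \<noteq> {}" using n3 by simp
  then show ?thesis unfolding maxCurv_def by (simp add: kappa_regular image_constant_conv)
qed

lemma Delta_regular: "Delta n q = ereal r"
proof -
  have "minRad n q = ereal r"
    unfolding minRad_def maxCurv_regular inradius_eq
    using regular_curvature_pos[OF n3] by (simp add: inverse_eq_divide)
  moreover have "ereal r \<le> dcsd q / 2"
    using dcsd_ge by (subst ereal_le_divide_pos) auto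
  ultimately show ?thesis unfolding Delta_def using inj_regular by (simp add: min_def)
qed

end

lemma Delta_inv_regular:
  fixes q :: "real \<Rightarrow> 'a::real_inner"
  assumes n: "n \<ge> 3" and reg: "regular_ngon n q"
  shows "Delta_inv n q = ereal (regular_curvature n)"
proof -
  obtain t0 c e1 e2 where "regular_polygon n q t0 c e1 e2"
    using reg n unfolding regular_ngon_def regular_polygon_def by blast
  then interpret regular_polygon n q t0 c e1 e2 .
  show ?thesis
    using Delta_regular inradius_eq regular_curvature_pos[OF n] by (simp add: Delta_inv_def)
qed

lemma minRad_bounds:
  fixes p :: "real \<Rightarrow> 'a::real_inner"
  assumes p: "p \<in> Pn n" and n: "n \<ge> 3"
  shows "0 \<le> minRad n p" and "minRad n p \<le> inverse (ereal (regular_curvature n))"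
proof -
  have T: "0 \<le> ereal (regular_curvature n)" using regular_curvature_pos[OF n] by simp
  have mc: "ereal (regular_curvature n) \<le> maxCurv n p" by (rule maxCurv_lower_bound[OF p n])
  show "0 \<le> minRad n p" unfolding minRad_def using order_trans[OF T mc] by (rule inverse_ereal_ge0I)
  show "minRad n p \<le> inverse (ereal (regular_curvature n))"
    unfolding minRad_def using T mc by (rule ereal_inverse_antimono)
qed

lemma Delta_nonneg:
  fixes p :: "real \<Rightarrow> 'a::real_inner"
  assumes p: "p \<in> Pn n" and n: "n \<ge> 3"
  shows "0 \<le> Delta n p"
proof -
  have "0 \<le> dcsd p" unfolding dcsd_def by (rule INF_greatest) simp
  then show ?thesis using minRad_bounds(1)[OF p n] by (simp add: Delta_def)
qed

lemma Delta_inv_lower_bound: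
  fixes p :: "real \<Rightarrow> 'a::real_inner"
  assumes p: "p \<in> Pn n" and n: "n \<ge> 3"
  shows "ereal (regular_curvature n) \<le> Delta_inv n p"
proof (cases "inj_on (vert n p) {1..int n}")
  case False
  then show ?thesis by (simp add: Delta_inv_def Delta_def)
next
  case True
  have "Delta n p \<le> inverse (ereal (regular_curvature n))"
    using True minRad_bounds(2)[OF p n] by (simp add: Delta_def min.coboundedI1)
  with Delta_nonneg[OF p n] have "inverse (inverse (ereal (regular_curvature n))) \<le> Delta_inv n p"
    unfolding Delta_inv_def by (rule ereal_inverse_antimono)
  then show ?thesis using regular_curvature_pos[OF n] by simp
qed

text \<open>Equality forces minRad p >= 1 / (2 n tan(pi/n)), i.e. maxCurv p <= 2 n tan(pi/n),
  so p is regular.\<close>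

lemma regular_of_Delta_inv_eq:
  fixes p :: "real \<Rightarrow> 'a::real_inner"
  assumes p: "p \<in> Pn n" and n: "n \<ge> 3" and eq: "Delta_inv n p = ereal (regular_curvature n)"
  shows "regular_ngon n p"
proof -
  define T where "T = ereal (regular_curvature n)"
  have T: "0 < T" using regular_curvature_pos[OF n] by (simp add: T_def)
  have inj: "inj_on (vert n p) {1..int n}" using eq by (auto simp: Delta_inv_def Delta_def split: if_splits)
  have "inverse (Delta_inv n p) = Delta n p" using Delta_nonneg[OF p n] by (simp add: Delta_inv_def)
  then have "inverse T \<le> minRad n p" using eq inj by (simp add: T_def Delta_def)
  then have "inverse (minRad n p) \<le> inverse (inverse T)"
    using T by (intro ereal_inverse_antimono) (simp add: inverse_ereal_ge0I)
  moreover have "inverse (minRad n p) = maxCurv n p"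
    using maxCurv_lower_bound[OF p n] T by (auto simp: minRad_def T_def)
  ultimately have "maxCurv n p \<le> ereal (regular_curvature n)" using T by (simp add: T_def)
  then show ?thesis by (rule regular_of_maxCurv_le[OF p n])
qed

theorem proposition5:
  fixes p g :: "real \<Rightarrow> 'a::euclidean_space" and n :: nat
  assumes "DIM('a) \<ge> 2"
    and "n \<ge> 3"
    and "p \<in> Pn n"
    and "regular_ngon n g"
  shows "Delta_inv n g \<le> Delta_inv n p \<and> (Delta_inv n g = Delta_inv n p \<longleftrightarrow> regular_ngon n p)"
proof -
  have g: "Delta_inv n g = ereal (regular_curvature n)" by (rule Delta_inv_regular[OF assms(2,4)])
  have "ereal (regular_curvature n) \<le> Delta_inv n p" by (rule Delta_inv_lower_bound[OF assms(3,2)])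
  moreover have "ereal (regular_curvature n) = Delta_inv n p \<longleftrightarrow> regular_ngon n p"
    using regular_of_Delta_inv_eq[OF assms(3,2)] Delta_inv_regular[OF assms(2), of p] by fastforce
  ultimately show ?thesis unfolding g by blast
qed

end
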